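(* Consider a solution $(s(t),x(t),o(t))$, $t\ge0$, of the networked SIR epidemic-opinion model described in the context, under the standing assumption stated there. Then the solution converges to an equilibrium of the form $(s_e,\mathbf 0,(\bar L+I_n)^{-1}(\mathbf 1_n-s_e))$ for some $s_e\in[0,1]^n$, and the convergence is exponentially fast.
   Context: There are $n$ communities. For $t\ge0$ and $i\in[n]$, $s_i(t),x_i(t),o_i(t)\in[0,1]$ denote the susceptible proportion, infected proportion and opinion of community $i$. The disease transmission network is a directed graph $\mathcal G=(\mathcal V,\mathcal E)$ on $n$ nodes with edge weights $\beta_{ij}>0$ if $(v_j,v_i)\in\mathcal E$ (and $\beta_{ij}=0$ otherwise); $\mathcal N_i=\{v_j:(v_j,v_i)\in\mathcal E\}$. The opinion network is a directed graph $\bar{\mathcal G}$ on the same nodes with nonnegative weights $\bar a_{ij}$ and Laplacian $\bar L=\mathrm{diag}(k_1,\dots,k_n)-\bar A$, $[\bar A]_{ij}=\bar a_{ij}$, $k_i=\sum_j\bar a_{ij}$. The model is $\dot s_i=-s_i\sum_{j\in\mathcal N_i}\big(\beta_{ij}-(\beta_{ij}-\beta_{\min})o_i\big)x_j$, $\dot x_i=s_i\sum_{j\in\mathcal N_i}\big(\beta_{ij}-(\beta_{ij}-\beta_{\min})o_i\big)x_j-\big(\gamma_{\min}+(\gamma_i-\gamma_{\min})o_i\big)x_i$, $\dot o=(\mathbf 1_n-s)-(\bar L+I_n)o$. Standing assumption: for all $i$, $s_i(0),x_i(0),o_i(0)\in[0,1]$ with $s_i(0)+x_i(0)\le1$, $\gamma_i\ge\gamma_{\min}>0$,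 $\beta_{ij}\ge\beta_{\min}>0$ for all $j\in\mathcal N_i$, and $\mathcal G$, $\bar{\mathcal G}$ strongly connected. *)

theory Defs
  imports "HOL-Analysis.Analysis"
begin

definition edge_rel :: "('n \<Rightarrow> 'n \<Rightarrow> real) \<Rightarrow> ('n \<times> 'n) set" where
  "edge_rel w = {(j, i). w i j > 0}"

definition strongly_connected :: "('n \<Rightarrow> 'n \<Rightarrow> real) \<Rightarrow> bool" where
  "strongly_connected w \<longleftrightarrow> (\<forall>i j. (i, j) \<in> (edge_rel w)\<^sup>*)"

definition nbrs :: "('n \<Rightarrow> 'n \<Rightarrow> real) \<Rightarrow> 'n \<Rightarrow> 'n set" where
  "nbrs w i = {j. w i j > 0}"

definition laplacian :: "('n::finite \<Rightarrow> 'n \<Rightarrow> real) \<Rightarrow> real^'n^'n" where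
  "laplacian a = (\<chi> i j. (if i = j then (\<Sum>k\<in>UNIV. a i k) else 0) - a i j)"

end

(*
  Comparison principles for cooperative linear differential inequalities show that s, x and
  opn stay in [0, 1]. Since s is nonincreasing it converges to se = inf s, and the opinion
  equation, forced by 1 - s, then drives opn to oe = (L + I)^-1 (1 - se). Afterwards the
  infection obeys x' = Q(t) x with Metzler matrices Q(t) converging to Q(se, oe). After
  splitting off the nodes on which the infection dies out, Ville's theorem of the alternative
  yields either a positive vector v with Q v < 0, which forces x <= C e^(-eps t) v, or a
  nonnegative left vector w with w Q >= 0, which would keep the weighted infection w . x away
  from 0 and hence make the total mass of s + x, which decreases at rate at least
  gamma_min * sum x, eventually negative. The exponential decay of x carries over to s - se by
  integrating s', and to opn - oe by the comparison principle for the opinion dynamics.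
*)
theory Submission
  imports Defs
begin

section \<open>Differential inequalities\<close>

lemma has_real_derivative_vec_nth:
  assumes "(f has_vector_derivative D) F"
  shows "((\<lambda>t. f t $ i) has_real_derivative D $ i) F"
  using bounded_linear.has_vector_derivative[OF bounded_linear_vec_nth assms]
  by (simp add: has_real_derivative_iff_has_vector_derivative)

lemma has_vector_derivative_imp_continuous_on_atLeast:
  assumes "\<And>t. t \<ge> a \<Longrightarrow> (f has_vector_derivative f' t) (at t within {a..})"
  shows "continuous_on {a..} f"
  using assms by (meson atLeast_iff continuous_on_eq_continuous_within has_vector_derivative_continuous)

lemma nonneg_derivative_imp_le_atLeast:
  fixes h h' :: "real \<Rightarrow> real"
  assumes der: "\<And>t. t \<ge> a \<Longrightarrow> (h has_real_derivative h' t) (at t within {a..})"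
    and nonneg: "\<And>t. t \<ge> a \<Longrightarrow> h' t \<ge> 0" and "a \<le> b"
  shows "h a \<le> h b"
proof (rule DERIV_nonneg_imp_increasing_open[OF \<open>a \<le> b\<close>])
  fix t assume t: "a < t" "t < b"
  have "at t within {a..} = at t" using t by (intro at_within_interior) auto
  then show "\<exists>y. DERIV h t :> y \<and> y \<ge> 0" using der[of t] nonneg[of t] t by auto
next
  have "continuous_on {a..} h"
    unfolding continuous_on_eq_continuous_within using der DERIV_continuous by (meson atLeast_iff)
  then show "continuous_on {a..b} h" by (rule continuous_on_subset) auto
qed

lemma first_nonpositive_time:
  fixes z :: "real \<Rightarrow> 'n::finite \<Rightarrow> real"
  assumes cont: "\<And>k. continuous_on {a..b} (\<lambda>t. z t k)"
    and start: "\<And>k. z a k > 0" and stop: "z b k \<le> 0" and "a \<le> b"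
  obtains t k where "a < t" "t \<le> b" "z t k = 0" "\<And>j. z t j \<ge> 0"
    "\<And>u j. a \<le> u \<Longrightarrow> u < t \<Longrightarrow> z u j > 0"
proof -
  define H where "H = (\<Union>k. {t \<in> {a..b}. z t k \<le> 0})"
  have "closed H"
    unfolding H_def using continuous_on_closed_Collect_le[OF cont continuous_on_const closed_atLeastAtMost]
    by (intro closed_UN) auto
  moreover have "b \<in> H" "bdd_below H"
    using stop \<open>a \<le> b\<close> unfolding H_def by (auto intro!: bdd_belowI[of _ a])
  ultimately have "Inf H \<in> H" using closed_contains_Inf by blast
  then obtain k where k: "Inf H \<in> {a..b}" "z (Inf H) k \<le> 0" unfolding H_def by auto
  have before: "z u j > 0" if "a \<le> u" "u < Inf H" for u j
  proof (rule ccontr)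
    assume "\<not> z u j > 0"
    then have "u \<in> {t \<in> {a..b}. z t j \<le> 0}" using that k by auto
    then have "u \<in> H" unfolding H_def by blast
    then show False using cInf_lower[OF _ \<open>bdd_below H\<close>] that by fastforce
  qed
  have "Inf H \<noteq> a" using k start[of k] by auto
  then have after_a: "a < Inf H" using k by auto
  have "z (Inf H) j \<ge> 0" for j
  proof (rule tendsto_lowerbound)
    show "((\<lambda>t. z t j) \<longlongrightarrow> z (Inf H) j) (at (Inf H) within {a..<Inf H})"
    proof (rule tendsto_within_subset)
      show "((\<lambda>t. z t j) \<longlongrightarrow> z (Inf H) j) (at (Inf H) within {a..b})"
        using cont[of j] k(1) unfolding continuous_on_def by blast
    qed (use k in auto)
    show "\<forall>\<^sub>F t in at (Inf H) within {a..<Inf H}. 0 \<le> z t j"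
      by (auto simp: eventually_at_filter intro!: always_eventually less_imp_le before)
    show "at (Inf H) within {a..<Inf H} \<noteq> bot"
      using after_a by (subst at_within_eq_bot_iff) (auto simp: closure_atLeastLessThan)
  qed
  with k after_a before show ?thesis
    by (intro that[of "Inf H" k]) (auto intro: antisym)
qed

lemma nonneg_if_perturbations_nonneg:
  fixes c S :: real
  assumes "\<And>\<delta>. \<delta> > 0 \<Longrightarrow> 0 \<le> c + \<delta> * S"
  shows "0 \<le> c"
proof (rule tendsto_lowerbound)
  show "((\<lambda>\<delta>. c + \<delta> * S) \<longlongrightarrow> c) (at_right 0)"
    by (auto intro!: tendsto_eq_intros)
  show "\<forall>\<^sub>F \<delta> in at_right 0. 0 \<le> c + \<delta> * S"
    using assms by (auto simp: eventually_at_right_field intro!: exI[of _ 1])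
qed simp

lemma continuous_row_sums_bounded:
  fixes P :: "real \<Rightarrow> 'n::finite \<Rightarrow> 'n \<Rightarrow> real"
  assumes cont: "\<And>i j. continuous_on {a..b} (\<lambda>t. P t i j)" and "a \<le> b"
  obtains K where "\<And>u i. u \<in> {a..b} \<Longrightarrow> (\<Sum>j\<in>UNIV. P u i j) \<le> K"
proof -
  define rows where "rows u = (\<Sum>i\<in>UNIV. \<bar>\<Sum>j\<in>UNIV. P u i j\<bar>)" for u
  have "continuous_on {a..b} rows"
    unfolding rows_def by (intro continuous_intros cont)
  then obtain K where K: "\<And>u. u \<in> {a..b} \<Longrightarrow> rows u \<le> K"
    using continuous_attains_sup[of "{a..b}" rows] \<open>a \<le> b\<close> by fastforce
  have "(\<Sum>j\<in>UNIV. P u i j) \<le> K" if "u \<in> {a..b}" for u i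
  proof -
    have "(\<Sum>j\<in>UNIV. P u i j) \<le> rows u"
      unfolding rows_def
      by (rule order_trans[OF abs_ge_self member_le_sum[where f = "\<lambda>i. \<bar>\<Sum>j\<in>UNIV. P u i j\<bar>"]]) auto
    then show ?thesis using K[OF that] by linarith
  qed
  then show ?thesis by (rule that)
qed

lemma derivative_nonpos_at_first_zero:
  fixes f :: "real \<Rightarrow> real"
  assumes der: "(f has_real_derivative D) (at t)" and "f t = 0" "a < t"
    and before: "\<And>u. a \<le> u \<Longrightarrow> u < t \<Longrightarrow> 0 < f u"
  shows "D \<le> 0"
proof (rule ccontr)
  assume "\<not> D \<le> 0"
  then obtain d where "d > 0" and dec: "\<And>h. h > 0 \<Longrightarrow> h < d \<Longrightarrow> f (t - h) < f t"
    using DERIV_pos_inc_left[OF der] by force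
  define h where "h = min (d/2) ((t - a)/2)"
  have h: "0 < h" "h < d" "h \<le> (t - a)/2" using \<open>d > 0\<close> \<open>a < t\<close> by (auto simp: h_def min_def)
  then have "f (t - h) < 0" using dec \<open>f t = 0\<close> by fastforce
  moreover have "f (t - h) > 0" using h by (intro before) auto
  ultimately show False by simp
qed

lemma metzler_comparison_nonneg:
  fixes y y' :: "real \<Rightarrow> real^'n::finite" and P :: "real \<Rightarrow> 'n \<Rightarrow> 'n \<Rightarrow> real"
  assumes cont: "\<And>i j. continuous_on {a..} (\<lambda>t. P t i j)"
    and offdiag: "\<And>t i j. t \<ge> a \<Longrightarrow> i \<noteq> j \<Longrightarrow> P t i j \<ge> 0"
    and der: "\<And>t. t \<ge> a \<Longrightarrow> (y has_vector_derivative y' t) (at t within {a..})"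
    and ineq: "\<And>t i. t \<ge> a \<Longrightarrow> y' t $ i \<ge> (\<Sum>j\<in>UNIV. P t i j * y t $ j)"
    and init: "\<And>i. y a $ i \<ge> 0" and "a \<le> b"
  shows "y b $ i \<ge> 0"
proof -
  obtain K where row_bound: "\<And>u i. u \<in> {a..b} \<Longrightarrow> (\<Sum>j\<in>UNIV. P u i j) \<le> K"
    by (rule continuous_row_sums_bounded[of a b P])
      (use \<open>a \<le> b\<close> in \<open>auto intro: continuous_on_subset[OF cont]\<close>)
  \<comment> \<open>If y + \<epsilon> e^(rate (t - a)) first touched zero in some component k, a growth rate exceeding
    the row sums of P would make that component strictly increasing there.\<close>
  define rate where "rate = \<bar>K\<bar> + 1"
  have perturbed_pos: "0 < y b $ i + \<epsilon> * exp (rate * (b - a))" if "\<epsilon> > 0" for \<epsilon>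
  proof (rule ccontr)
    assume neg: "\<not> ?thesis"
    define z where "z u k = y u $ k + \<epsilon> * exp (rate * (u - a))" for u k
    have "continuous_on {a..b} y"
      using has_vector_derivative_imp_continuous_on_atLeast[OF der]
      by (rule continuous_on_subset) auto
    then have z_cont: "continuous_on {a..b} (\<lambda>u. z u k)" for k
      unfolding z_def by (intro continuous_on_add continuous_on_component continuous_intros)
    have z_start: "z a k > 0" for k using init[of k] \<open>\<epsilon> > 0\<close> by (simp add: z_def add_nonneg_pos)
    have z_stop: "z b i \<le> 0" using neg by (simp add: z_def)
    obtain t k where t: "a < t" "t \<le> b" "z t k = 0" "\<And>j. z t j \<ge> 0"
      and before: "\<And>u j. a \<le> u \<Longrightarrow> u < t \<Longrightarrow> z u j > 0"
      using first_nonpositive_time[of a b z, OF z_cont z_start z_stop \<open>a \<le> b\<close>] by blast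
    define E where "E = \<epsilon> * exp (rate * (t - a))"
    have "E > 0" using \<open>\<epsilon> > 0\<close> by (simp add: E_def)
    have "((\<lambda>u. z u k) has_real_derivative y' t $ k + rate * E) (at t within {a..})"
      unfolding z_def E_def using t
      by (auto intro!: derivative_eq_intros has_real_derivative_vec_nth der)
    moreover have "at t within {a..} = at t" using t by (intro at_within_interior) auto
    ultimately have "((\<lambda>u. z u k) has_real_derivative y' t $ k + rate * E) (at t)" by simp
    then have "y' t $ k + rate * E \<le> 0"
      by (rule derivative_nonpos_at_first_zero) (use t before in auto)
    have "z t j = y t $ j + E" for j by (simp add: z_def E_def)
    then have "(\<Sum>j\<in>UNIV. P t k j * z t j) = (\<Sum>j\<in>UNIV. P t k j * y t $ j) + E * (\<Sum>j\<in>UNIV. P t k j)"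
      by (simp add: distrib_left sum.distrib sum_distrib_left mult.commute)
    moreover have "(\<Sum>j\<in>UNIV. P t k j * z t j) \<ge> 0"
      using t offdiag[of t k] by (intro sum_nonneg) (metis mult_nonneg_nonneg mult_zero_right order.refl less_imp_le)
    moreover have "E * (\<Sum>j\<in>UNIV. P t k j) \<le> E * K"
      using row_bound[of t k] t \<open>E > 0\<close> by (intro mult_left_mono) auto
    moreover have "E * K < E * rate" using \<open>E > 0\<close> by (simp add: rate_def)
    moreover have "(\<Sum>j\<in>UNIV. P t k j * y t $ j) \<le> y' t $ k" using ineq[of t k] t by simp
    ultimately have "0 < y' t $ k + rate * E" by (simp add: mult.commute)
    with \<open>y' t $ k + rate * E \<le> 0\<close> show False by simp
  qed
  show ?thesis
    using nonneg_if_perturbations_nonneg[of "y b $ i" "exp (rate * (b - a))"] perturbed_pos by fastforce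
qed

lemma unit_rows_flow_lower_bound:
  fixes M :: "real^'n::finite^'n" and z u :: "real \<Rightarrow> real^'n" and \<phi> \<phi>' :: "real \<Rightarrow> real"
  assumes offdiag: "\<And>i j. i \<noteq> j \<Longrightarrow> M $ i $ j \<le> 0" and rows: "M *v 1 = 1"
    and z_der: "\<And>t. t \<ge> T \<Longrightarrow> (z has_vector_derivative u t - M *v z t) (at t within {T..})"
    and \<phi>_der: "\<And>t. t \<ge> T \<Longrightarrow> (\<phi> has_real_derivative \<phi>' t) (at t within {T..})"
    and forcing: "\<And>t i. t \<ge> T \<Longrightarrow> 0 \<le> u t $ i + \<phi> t + \<phi>' t"
    and init: "\<And>i. 0 \<le> z T $ i + \<phi> T" and "T \<le> t"
  shows "0 \<le> z t $ i + \<phi> t"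
proof -
  define P where "P t i j = - M $ i $ j" for t :: real and i j
  \<comment> \<open>Since M 1 = 1, y = z + \<phi> 1 satisfies y' \<ge> - M y.\<close>
  define y where "y t = z t + \<phi> t *\<^sub>R 1" for t
  have "0 \<le> y t $ i"
  proof (rule metzler_comparison_nonneg[of T P y "\<lambda>t. u t - M *v z t + \<phi>' t *\<^sub>R 1"])
    fix t and i j :: 'n assume "i \<noteq> j"
    then show "0 \<le> P t i j" using offdiag by (simp add: P_def)
  next
    fix t assume "T \<le> t"
    then show "(y has_vector_derivative u t - M *v z t + \<phi>' t *\<^sub>R 1) (at t within {T..})"
      unfolding y_def by (intro has_vector_derivative_add z_der) (auto intro!: derivative_eq_intros \<phi>_der)
  next
    fix t and i :: 'n assume "T \<le> t"
    have "(\<Sum>j\<in>UNIV. P t i j * y t $ j) = - (M *v y t) $ i"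
      by (simp add: P_def matrix_vector_mult_def sum_negf)
    also have "M *v y t = M *v z t + \<phi> t *\<^sub>R 1"
      by (simp add: y_def matrix_vector_right_distrib matrix_vector_mult_scaleR rows)
    finally have "(\<Sum>j\<in>UNIV. P t i j * y t $ j) = - (M *v z t) $ i - \<phi> t" by simp
    then show "(\<Sum>j\<in>UNIV. P t i j * y t $ j) \<le> (u t - M *v z t + \<phi>' t *\<^sub>R 1) $ i"
      using forcing[OF \<open>T \<le> t\<close>, of i] by simp
  qed (use init \<open>T \<le> t\<close> in \<open>auto simp: y_def P_def\<close>)
  then show ?thesis by (simp add: y_def)
qed

lemma metzler_exp_bound:
  fixes y y' :: "real \<Rightarrow> real^'n::finite" and P :: "real \<Rightarrow> 'n \<Rightarrow> 'n \<Rightarrow> real" and v :: "real^'n"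
  assumes cont: "\<And>i j. continuous_on {a..} (\<lambda>t. P t i j)"
    and offdiag: "\<And>t i j. t \<ge> a \<Longrightarrow> i \<noteq> j \<Longrightarrow> P t i j \<ge> 0"
    and der: "\<And>t. t \<ge> a \<Longrightarrow> (y has_vector_derivative y' t) (at t within {a..})"
    and ineq: "\<And>t i. t \<ge> a \<Longrightarrow> y' t $ i \<le> (\<Sum>j\<in>UNIV. P t i j * y t $ j)"
    and v: "\<And>i. 0 < v $ i" and decay: "\<And>t i. t \<ge> a \<Longrightarrow> (\<Sum>j\<in>UNIV. P t i j * v $ j) \<le> - \<epsilon> * v $ i"
    and init: "\<And>k. 0 \<le> y a $ k" and "a \<le> t"
  shows "y t $ i \<le> (\<Sum>k\<in>UNIV. y a $ k / v $ k) * exp (- \<epsilon> * (t - a)) * v $ i"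
proof -
  define C where "C = (\<Sum>k\<in>UNIV. y a $ k / v $ k)"
  have ratio_le: "y a $ k / v $ k \<le> C" for k
    unfolding C_def using init v
    by (intro member_le_sum[where f = "\<lambda>k. y a $ k / v $ k"]) (auto intro: divide_nonneg_pos)
  have "0 \<le> C" using ratio_le[of i] init[of i] v[of i] by (meson divide_nonneg_pos order_trans)
  define E where "E t = C * exp (- \<epsilon> * (t - a))" for t
  define z where "z t = E t *\<^sub>R v - y t" for t
  have "0 \<le> z t $ i"
  proof (rule metzler_comparison_nonneg[of a P z "\<lambda>t. (- \<epsilon> * E t) *\<^sub>R v - y' t"])
    fix t assume "a \<le> t"
    have "(E has_real_derivative - \<epsilon> * E t) (at t within {a..})"
      unfolding E_def by (auto intro!: derivative_eq_intros)
    from has_vector_derivative_scaleR[OF this has_vector_derivative_const]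
    have "((\<lambda>t. E t *\<^sub>R v) has_vector_derivative (- \<epsilon> * E t) *\<^sub>R v) (at t within {a..})" by simp
    then show "(z has_vector_derivative (- \<epsilon> * E t) *\<^sub>R v - y' t) (at t within {a..})"
      unfolding z_def using der[OF \<open>a \<le> t\<close>] by (rule has_vector_derivative_diff)
  next
    fix t and i :: 'n assume "a \<le> t"
    have "0 \<le> E t" using \<open>0 \<le> C\<close> by (simp add: E_def)
    have "P t i j * z t $ j = E t * (P t i j * v $ j) - P t i j * y t $ j" for j
      by (simp add: z_def algebra_simps)
    then have "(\<Sum>j\<in>UNIV. P t i j * z t $ j)
        = E t * (\<Sum>j\<in>UNIV. P t i j * v $ j) - (\<Sum>j\<in>UNIV. P t i j * y t $ j)"
      by (simp add: sum_subtractf sum_distrib_left)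
    also have "\<dots> \<le> E t * (- \<epsilon> * v $ i) - y' t $ i"
      using mult_left_mono[OF decay[OF \<open>a \<le> t\<close>, of i] \<open>0 \<le> E t\<close>] ineq[OF \<open>a \<le> t\<close>, of i] by linarith
    finally show "(\<Sum>j\<in>UNIV. P t i j * z t $ j) \<le> ((- \<epsilon> * E t) *\<^sub>R v - y' t) $ i"
      by (simp add: ac_simps)
  next
    fix i show "0 \<le> z a $ i"
      using ratio_le[of i] v[of i] by (simp add: z_def E_def divide_le_eq)
  qed (use cont offdiag \<open>a \<le> t\<close> in auto)
  then show ?thesis by (simp add: z_def E_def C_def)
qed

lemma tendsto_exp_neg_mult_at_top:
  fixes \<epsilon> :: real
  assumes "\<epsilon> > 0"
  shows "((\<lambda>t. exp (- \<epsilon> * t)) \<longlongrightarrow> 0) at_top"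
proof (rule filterlim_compose[OF exp_at_bot])
  have "LIM t at_top. \<epsilon> * t :> at_top"
    using assms by (intro filterlim_tendsto_pos_mult_at_top[OF tendsto_const] filterlim_ident)
  then show "LIM t at_top. - \<epsilon> * t :> at_bot"
    by (simp add: filterlim_uminus_at_bot)
qed

lemma growth_lower_bound_exp_neg:
  fixes y y' :: "real \<Rightarrow> real"
  assumes der: "\<And>t. t \<ge> a \<Longrightarrow> (y has_real_derivative y' t) (at t within {a..})"
    and rate: "\<And>t. t \<ge> a \<Longrightarrow> y' t \<ge> - \<kappa> * exp (- t) * y t"
    and "\<kappa> \<ge> 0" "y a \<ge> 0" "a \<le> b"
  shows "y b \<ge> y a * exp (- \<kappa> * exp (- a))"
proof -
  define h where "h t = y t * exp (- \<kappa> * exp (- t))" for t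
  have "h a \<le> h b"
  proof (rule nonneg_derivative_imp_le_atLeast[OF _ _ \<open>a \<le> b\<close>])
    fix t assume "t \<ge> a"
    show "(h has_real_derivative exp (- \<kappa> * exp (- t)) * (y' t + \<kappa> * exp (- t) * y t))
        (at t within {a..})"
      unfolding h_def using der[OF \<open>t \<ge> a\<close>]
      by (auto intro!: derivative_eq_intros simp: algebra_simps)
    show "exp (- \<kappa> * exp (- t)) * (y' t + \<kappa> * exp (- t) * y t) \<ge> 0"
      using rate[OF \<open>t \<ge> a\<close>] by simp
  qed
  moreover have "h a \<ge> 0" using \<open>y a \<ge> 0\<close> by (simp add: h_def)
  ultimately have "h b \<ge> 0" by linarith
  then have "y b \<ge> 0" by (simp add: h_def zero_le_mult_iff)
  then have "h b \<le> y b" unfolding h_def using \<open>\<kappa> \<ge> 0\<close> by (simp add: mult_left_le)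
  with \<open>h a \<le> h b\<close> show ?thesis by (simp add: h_def)
qed

lemma limit_gap_le_exp_neg:
  fixes g g' :: "real \<Rightarrow> real"
  assumes der: "\<And>t. t \<ge> 0 \<Longrightarrow> (g has_real_derivative g' t) (at t within {0..})"
    and slope: "\<And>t. t \<ge> 0 \<Longrightarrow> g' t \<ge> - B * exp (- \<epsilon> * t)"
    and "\<epsilon> > 0" and lim: "(g \<longlongrightarrow> L) at_top" and "\<tau> \<ge> 0"
  shows "g \<tau> - L \<le> B / \<epsilon> * exp (- \<epsilon> * \<tau>)"
proof -
  define h where "h t = g t - B / \<epsilon> * exp (- \<epsilon> * t)" for t
  have "h \<tau> \<le> h \<sigma>" if "\<sigma> \<ge> \<tau>" for \<sigma>
  proof (rule nonneg_derivative_imp_le_atLeast[OF _ _ that])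
    fix t assume "t \<ge> \<tau>"
    then have "(g has_real_derivative g' t) (at t within {\<tau>..})"
      using der[of t] \<open>\<tau> \<ge> 0\<close> by (auto intro: DERIV_subset)
    then show "(h has_real_derivative g' t + B * exp (- \<epsilon> * t)) (at t within {\<tau>..})"
      unfolding h_def using \<open>\<epsilon> > 0\<close> by (auto intro!: derivative_eq_intros)
    show "g' t + B * exp (- \<epsilon> * t) \<ge> 0" using slope[of t] \<open>t \<ge> \<tau>\<close> \<open>\<tau> \<ge> 0\<close> by simp
  qed
  moreover have "(h \<longlongrightarrow> L - B / \<epsilon> * 0) at_top"
    unfolding h_def by (intro tendsto_intros lim tendsto_exp_neg_mult_at_top \<open>\<epsilon> > 0\<close>)
  ultimately have "h \<tau> \<le> L"
    by (intro tendsto_lowerbound[of h _ at_top]) (auto simp: eventually_at_top_linorder)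
  then show ?thesis by (simp add: h_def)
qed

lemma ville_separation:
  fixes A :: "'n::finite \<Rightarrow> 'n \<Rightarrow> real"
  assumes no_solution: "\<not> (\<exists>v::real^'n. (\<forall>i. 0 \<le> v $ i) \<and> (\<forall>i. (\<Sum>j\<in>UNIV. A i j * v $ j) < 0))"
  obtains a :: "real^'n" where "a \<noteq> 0"
    "\<And>v p. (\<And>i. 0 \<le> v $ i) \<Longrightarrow> (\<And>i. 0 < p $ i) \<Longrightarrow>
      0 \<le> (\<Sum>i\<in>UNIV. a $ i * ((\<Sum>j\<in>UNIV. A i j * v $ j) + p $ i))"
proof -
  define f where "f v = (\<chi> i. \<Sum>j\<in>UNIV. A i j * v $ j)" for v :: "real^'n"
  define S where "S = (\<Union>x \<in> f ` {v. \<forall>i. 0 \<le> v $ i}. \<Union>p \<in> {p. \<forall>i. 0 < p $ i}. {x + p})"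
  have "linear f" unfolding f_def
    by (rule linearI) (simp_all add: vec_eq_iff sum.distrib sum_distrib_left algebra_simps)
  moreover have "convex {v::real^'n. \<forall>i. 0 \<le> v $ i}" "convex {p::real^'n. \<forall>i. 0 < p $ i}"
    by (rule convex_box_cart; simp add: atLeast_def[symmetric] greaterThan_def[symmetric])+
  ultimately have "convex S" unfolding S_def by (intro convex_sums convex_linear_image)
  moreover have "0 \<notin> S"
  proof
    assume "0 \<in> S"
    then obtain v p where "\<forall>i. 0 \<le> v $ i" "\<forall>i. 0 < p $ i" "f v + p = 0"
      unfolding S_def by auto
    then have "\<forall>i. (\<Sum>j\<in>UNIV. A i j * v $ j) < 0"
      by (auto simp: f_def vec_eq_iff add_eq_0_iff2 dest!: spec[of _ "_::'n"])
    with no_solution \<open>\<forall>i. 0 \<le> v $ i\<close> show False by blast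
  qed
  ultimately obtain a :: "real^'n" where "a \<noteq> 0" and sep: "\<And>x. x \<in> S \<Longrightarrow> 0 \<le> inner a x"
    using separating_hyperplane_set_0 by blast
  have "0 \<le> (\<Sum>i\<in>UNIV. a $ i * ((\<Sum>j\<in>UNIV. A i j * v $ j) + p $ i))"
    if "\<And>i. 0 \<le> v $ i" "\<And>i. 0 < p $ i" for v p
    using sep[of "f v + p"] that unfolding S_def by (fastforce simp: inner_vec_def f_def)
  with \<open>a \<noteq> 0\<close> show ?thesis by (rule that)
qed

lemma ville_alternative:
  fixes A :: "'n::finite \<Rightarrow> 'n \<Rightarrow> real"
  obtains (right) v :: "real^'n" where "\<And>i. 0 \<le> v $ i" "\<And>i. (\<Sum>j\<in>UNIV. A i j * v $ j) < 0"
    | (left) w :: "real^'n" where "\<And>i. 0 \<le> w $ i" "w \<noteq> 0" "\<And>j. 0 \<le> (\<Sum>i\<in>UNIV. w $ i * A i j)"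
proof (cases "\<exists>v::real^'n. (\<forall>i. 0 \<le> v $ i) \<and> (\<forall>i. (\<Sum>j\<in>UNIV. A i j * v $ j) < 0)")
  case True
  then show ?thesis using right by blast
next
  case False
  then obtain a :: "real^'n" where "a \<noteq> 0" and sep: "\<And>v p. (\<And>i. 0 \<le> v $ i) \<Longrightarrow> (\<And>i. 0 < p $ i) \<Longrightarrow>
      0 \<le> (\<Sum>i\<in>UNIV. a $ i * ((\<Sum>j\<in>UNIV. A i j * v $ j) + p $ i))"
    by (rule ville_separation) blast
  have "0 \<le> a $ k" for k
  proof (rule nonneg_if_perturbations_nonneg)
    fix \<delta> :: real assume "\<delta> > 0"
    have "0 \<le> (\<Sum>i\<in>UNIV. a $ i * (\<delta> + of_bool (i = k)))"
      using sep[of 0 "\<chi> i. \<delta> + of_bool (i = k)"] \<open>\<delta> > 0\<close> by (simp add: add_pos_nonneg)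
    also have "\<dots> = (\<Sum>i\<in>UNIV. \<delta> * a $ i + (if i = k then a $ i else 0))"
      by (rule sum.cong) (auto simp: algebra_simps)
    also have "\<dots> = a $ k + \<delta> * (\<Sum>i\<in>UNIV. a $ i)"
      by (simp add: sum.distrib sum_distrib_left)
    finally show "0 \<le> a $ k + \<delta> * (\<Sum>i\<in>UNIV. a $ i)" .
  qed
  moreover have "0 \<le> (\<Sum>i\<in>UNIV. a $ i * A i j)" for j
  proof (rule nonneg_if_perturbations_nonneg)
    fix \<delta> :: real assume "\<delta> > 0"
    have "0 \<le> (\<Sum>i\<in>UNIV. a $ i * (A i j + \<delta>))"
      using sep[of "axis j 1" "\<chi> i. \<delta>"] \<open>\<delta> > 0\<close>
      by (simp add: axis_def if_distrib sum.If_cases cong: if_cong)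
    also have "\<dots> = (\<Sum>i\<in>UNIV. a $ i * A i j) + \<delta> * (\<Sum>i\<in>UNIV. a $ i)"
      by (simp add: distrib_left sum.distrib sum_distrib_left mult.commute)
    finally show "0 \<le> (\<Sum>i\<in>UNIV. a $ i * A i j) + \<delta> * (\<Sum>i\<in>UNIV. a $ i)" .
  qed
  ultimately show ?thesis using left \<open>a \<noteq> 0\<close> by blast
qed

lemma laplacian_plus_id_nth:
  "(laplacian a + mat 1) $ i $ j = (if i = j then 1 + (\<Sum>k\<in>UNIV. a i k) else 0) - a i j"
  by (simp add: laplacian_def mat_def)

lemma laplacian_plus_id_mult_nth:
  "((laplacian a + mat 1) *v v) $ i = (1 + (\<Sum>k\<in>UNIV. a i k)) * v $ i - (\<Sum>j\<in>UNIV. a i j * v $ j)"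
proof -
  have "((laplacian a + mat 1) *v v) $ i
      = (\<Sum>j\<in>UNIV. ((if i = j then 1 + (\<Sum>k\<in>UNIV. a i k) else 0) - a i j) * v $ j)"
    unfolding matrix_vector_mult_def vec_lambda_beta laplacian_plus_id_nth ..
  also have "\<dots> = (\<Sum>j\<in>UNIV. (if i = j then (1 + (\<Sum>k\<in>UNIV. a i k)) * v $ j else 0) - a i j * v $ j)"
    by (intro sum.cong) (auto simp: algebra_simps)
  finally show ?thesis by (simp add: sum_subtractf)
qed

lemma laplacian_plus_id_mult_one: "(laplacian a + mat 1) *v 1 = 1"
  by (simp add: vec_eq_iff laplacian_plus_id_mult_nth)

lemma laplacian_plus_id_min_principle:
  assumes nonneg: "\<And>i j. 0 \<le> a i j"
    and sol: "(laplacian a + mat 1) *v v = b" and lower: "\<And>i. c \<le> b $ i"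
  shows "c \<le> v $ i"
proof -
  have "Min (range (\<lambda>j. v $ j)) \<in> range (\<lambda>j. v $ j)" by (rule Min_in) auto
  then obtain m where m: "v $ m = Min (range (\<lambda>j. v $ j))" by (metis rangeE)
  have min: "v $ m \<le> v $ j" for j unfolding m by (rule Min_le) auto
  have "(\<Sum>j\<in>UNIV. a m j * v $ m) \<le> (\<Sum>j\<in>UNIV. a m j * v $ j)"
    using nonneg min by (intro sum_mono mult_left_mono) auto
  moreover have "b $ m = (1 + (\<Sum>k\<in>UNIV. a m k)) * v $ m - (\<Sum>j\<in>UNIV. a m j * v $ j)"
    unfolding sol[symmetric] by (rule laplacian_plus_id_mult_nth)
  moreover have "(1 + (\<Sum>k\<in>UNIV. a m k)) * v $ m = v $ m + (\<Sum>j\<in>UNIV. a m j * v $ m)"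
    by (simp add: distrib_right sum_distrib_right)
  ultimately have "b $ m \<le> v $ m" by linarith
  then show ?thesis using lower[of m] min[of i] by linarith
qed

lemma laplacian_plus_id_invertible:
  fixes a :: "'n::finite \<Rightarrow> 'n \<Rightarrow> real"
  assumes "\<And>i j. 0 \<le> a i j"
  shows "invertible (laplacian a + mat 1)"
proof -
  have "v = 0" if "(laplacian a + mat 1) *v v = 0" for v :: "real^'n"
  proof -
    have "(laplacian a + mat 1) *v (- v) = 0"
    proof -
      have "A *v (- w) = - (A *v w)" for A :: "real^'n^'n" and w
        by (simp add: vec_eq_iff matrix_vector_mult_def sum_negf)
      then show ?thesis by (simp only: that minus_zero)
    qed
    moreover have "0 \<le> w $ i" if "(laplacian a + mat 1) *v w = 0" for w i
      by (rule laplacian_plus_id_min_principle[of a w 0 0]) (use assms that in auto)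
    ultimately have "0 \<le> v $ i" "0 \<le> (- v) $ i" for i using that by blast+
    then show ?thesis by (simp add: vec_eq_iff order_antisym)
  qed
  then show ?thesis
    unfolding invertible_left_inverse matrix_left_invertible_ker by blast
qed

lemma laplacian_plus_id_mult_inv:
  assumes "\<And>i j. 0 \<le> a i j"
  shows "(laplacian a + mat 1) *v (matrix_inv (laplacian a + mat 1) *v w) = w"
proof -
  have "(laplacian a + mat 1) ** matrix_inv (laplacian a + mat 1) = mat 1"
    using laplacian_plus_id_invertible[OF assms] unfolding invertible_def matrix_inv_def
    by (rule someI_ex[THEN conjunct1])
  then show ?thesis by (simp add: matrix_vector_mul_assoc)
qed

text \<open>Replacing the columns of the nodes in Z by those of -I does not change A x for x vanishing
  on Z, but in Ville's alternative it forces any nonnegative left vector to vanish on Z.\<close>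
definition decouple :: "'n set \<Rightarrow> ('n \<Rightarrow> 'n \<Rightarrow> real) \<Rightarrow> 'n \<Rightarrow> 'n \<Rightarrow> real" where
  "decouple Z A i j = (if j \<in> Z then - of_bool (i = j) else A i j)"

lemma decouple_mult:
  fixes v :: "real^'n::finite"
  assumes "\<And>j. j \<in> Z \<Longrightarrow> v $ j = 0"
  shows "(\<Sum>j\<in>UNIV. decouple Z A i j * v $ j) = (\<Sum>j\<in>UNIV. A i j * v $ j)"
  using assms by (intro sum.cong) (auto simp: decouple_def)

lemma decouple_column:
  fixes w :: "real^'n::finite"
  assumes "j \<in> Z"
  shows "(\<Sum>i\<in>UNIV. w $ i * decouple Z A i j) = - w $ j"
  using assms by (simp add: decouple_def of_bool_def sum_negf if_distrib[of "\<lambda>c. _ * c"] cong: if_cong)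

lemma norm_le_card_mult:
  fixes v :: "real^'n::finite" and K :: real
  assumes "\<And>i. \<bar>v $ i\<bar> \<le> K"
  shows "norm v \<le> CARD('n) * K"
  using norm_le_l1_cart[of v] sum_bounded_above[of UNIV "\<lambda>i. \<bar>v $ i\<bar>" K] assms by simp

section \<open>The model and its invariant region\<close>

locale sir_opinion =
  fixes \<beta> abar :: "'n::finite \<Rightarrow> 'n \<Rightarrow> real"
    and \<gamma> :: "'n \<Rightarrow> real"
    and \<beta>min \<gamma>min :: real
    and s x opn :: "real \<Rightarrow> real^'n"
  assumes beta_nonneg: "\<And>i j. \<beta> i j \<ge> 0"
    and beta_min_pos: "\<beta>min > 0"
    and beta_ge: "\<And>i j. j \<in> nbrs \<beta> i \<Longrightarrow> \<beta> i j \<ge> \<beta>min"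
    and gamma_min_pos: "\<gamma>min > 0"
    and gamma_ge: "\<And>i. \<gamma> i \<ge> \<gamma>min"
    and abar_nonneg: "\<And>i j. abar i j \<ge> 0"
    and s0: "\<And>i. s 0 $ i \<in> {0..1}"
    and x0: "\<And>i. x 0 $ i \<in> {0..1}"
    and o0: "\<And>i. opn 0 $ i \<in> {0..1}"
    and sx0: "\<And>i. s 0 $ i + x 0 $ i \<le> 1"
    and ds: "\<And>t. t \<ge> 0 \<Longrightarrow> (s has_vector_derivative
              (\<chi> i. - s t $ i * (\<Sum>j\<in>nbrs \<beta> i. (\<beta> i j - (\<beta> i j - \<beta>min) * opn t $ i) * x t $ j)))
              (at t within {0..})"
    and dx: "\<And>t. t \<ge> 0 \<Longrightarrow> (x has_vector_derivative
              (\<chi> i. s t $ i * (\<Sum>j\<in>nbrs \<beta> i. (\<beta> i j - (\<beta> i j - \<beta>min) * opn t $ i) * x t $ j)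
                     - (\<gamma>min + (\<gamma> i - \<gamma>min) * opn t $ i) * x t $ i))
              (at t within {0..})"
    and do: "\<And>t. t \<ge> 0 \<Longrightarrow> (opn has_vector_derivative
              ((1 - s t) - (laplacian abar + mat 1) *v opn t))
              (at t within {0..})"
begin

definition M :: "real^'n^'n" where "M = laplacian abar + mat 1"

lemma M_offdiag: "i \<noteq> j \<Longrightarrow> M $ i $ j \<le> 0"
  unfolding M_def laplacian_plus_id_nth using abar_nonneg by simp

lemma M_mult_one: "M *v 1 = 1"
  unfolding M_def by (rule laplacian_plus_id_mult_one)

definition infection_rate :: "'n \<Rightarrow> 'n \<Rightarrow> real \<Rightarrow> real" where
  "infection_rate i j u = \<beta> i j - (\<beta> i j - \<beta>min) * u"

definition recovery_rate :: "'n \<Rightarrow> real \<Rightarrow> real" where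
  "recovery_rate i u = \<gamma>min + (\<gamma> i - \<gamma>min) * u"

definition force :: "real \<Rightarrow> 'n \<Rightarrow> real" where
  "force t i = (\<Sum>j\<in>nbrs \<beta> i. infection_rate i j (opn t $ i) * x t $ j)"

text \<open>Coefficient matrix of x' = Q x when the susceptible and opinion states are frozen at \<sigma> and \<omega>.\<close>
definition infection_matrix :: "real^'n \<Rightarrow> real^'n \<Rightarrow> 'n \<Rightarrow> 'n \<Rightarrow> real" where
  "infection_matrix \<sigma> \<omega> i j =
     (if j \<in> nbrs \<beta> i then \<sigma> $ i * infection_rate i j (\<omega> $ i) else 0)
     - (if i = j then recovery_rate i (\<omega> $ i) else 0)"

abbreviation Q :: "real \<Rightarrow> 'n \<Rightarrow> 'n \<Rightarrow> real" where "Q t \<equiv> infection_matrix (s t) (opn t)"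

lemma s_deriv: "t \<ge> 0 \<Longrightarrow> (s has_vector_derivative (\<chi> i. - s t $ i * force t i)) (at t within {0..})"
  using ds unfolding force_def infection_rate_def by simp

lemma x_deriv: "t \<ge> 0 \<Longrightarrow> (x has_vector_derivative
    (\<chi> i. s t $ i * force t i - recovery_rate i (opn t $ i) * x t $ i)) (at t within {0..})"
  using dx unfolding force_def infection_rate_def recovery_rate_def by simp

lemma infection_matrix_mult:
  "(\<Sum>j\<in>UNIV. Q t i j * x t $ j) = s t $ i * force t i - recovery_rate i (opn t $ i) * x t $ i"
proof -
  have "Q t i j * x t $ j
      = (if j \<in> nbrs \<beta> i then s t $ i * infection_rate i j (opn t $ i) * x t $ j else 0)
        - (if i = j then recovery_rate i (opn t $ i) * x t $ j else 0)" for j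
    by (simp add: infection_matrix_def left_diff_distrib)
  then have "(\<Sum>j\<in>UNIV. Q t i j * x t $ j)
      = (\<Sum>j\<in>UNIV. if j \<in> nbrs \<beta> i then s t $ i * infection_rate i j (opn t $ i) * x t $ j else 0)
        - (\<Sum>j\<in>UNIV. if i = j then recovery_rate i (opn t $ i) * x t $ j else 0)"
    by (simp only: sum_subtractf)
  then show ?thesis
    by (simp add: sum.If_cases force_def sum_distrib_left mult.assoc)
qed

lemma opn_deriv: "t \<ge> 0 \<Longrightarrow> (opn has_vector_derivative (1 - s t) - M *v opn t) (at t within {0..})"
  unfolding M_def by (rule do)

lemma x_deriv_matrix:
  "t \<ge> 0 \<Longrightarrow> (x has_vector_derivative (\<chi> i. \<Sum>j\<in>UNIV. Q t i j * x t $ j)) (at t within {0..})"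
  using x_deriv by (simp add: infection_matrix_mult)

lemma s_cont: "continuous_on {0..} s"
  using s_deriv by (rule has_vector_derivative_imp_continuous_on_atLeast)

lemma x_cont: "continuous_on {0..} x"
  using x_deriv by (rule has_vector_derivative_imp_continuous_on_atLeast)

lemma opn_cont: "continuous_on {0..} opn"
  using opn_deriv by (rule has_vector_derivative_imp_continuous_on_atLeast)

lemma force_cont: "continuous_on {0..} (\<lambda>t. force t i)"
  unfolding force_def infection_rate_def
  by (intro continuous_on_sum continuous_on_mult continuous_on_diff continuous_on_const
      continuous_on_component x_cont opn_cont)

lemma Q_cont: "continuous_on {0..} (\<lambda>t. Q t i j)"
  unfolding infection_matrix_def infection_rate_def recovery_rate_def
  by (cases "j \<in> nbrs \<beta> i"; cases "i = j"; simp;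
      intro continuous_on_diff continuous_on_mult continuous_on_add continuous_on_const
      continuous_on_component s_cont opn_cont)

lemma s_nonneg: "t \<ge> 0 \<Longrightarrow> 0 \<le> s t $ i"
proof (rule metzler_comparison_nonneg[of 0 "\<lambda>t i j. if i = j then - force t i else 0" s])
  fix i j show "continuous_on {0..} (\<lambda>t. if i = j then - force t i else 0)"
    by (cases "i = j") (auto intro!: continuous_on_minus force_cont)
next
  fix t :: real and i
  have "(\<Sum>j\<in>UNIV. (if i = j then - force t i else 0) * s t $ j) = - s t $ i * force t i"
    by (simp add: if_distrib[of "\<lambda>c. c * _"] cong: if_cong)
  then show "(\<Sum>j\<in>UNIV. (if i = j then - force t i else 0) * s t $ j) \<le> (\<chi> i. - s t $ i * force t i) $ i"
    by simp
qed (use s_deriv s0 in auto)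

lemma opn_le_1:
  assumes "t \<ge> 0"
  shows "opn t $ i \<le> 1"
proof -
  have "0 \<le> (1 - opn t) $ i + 0"
  proof (rule unit_rows_flow_lower_bound[OF M_offdiag M_mult_one _ _ _ _ assms])
    fix t :: real assume "t \<ge> 0"
    show "((\<lambda>t. 1 - opn t) has_vector_derivative s t - M *v (1 - opn t)) (at t within {0..})"
      using has_vector_derivative_diff[OF has_vector_derivative_const opn_deriv[OF \<open>t \<ge> 0\<close>]]
      by (rule has_vector_derivative_eq_rhs) (simp add: matrix_vector_mult_diff_distrib M_mult_one)
    show "0 \<le> s t $ i + 0 + 0" for i using s_nonneg[OF \<open>t \<ge> 0\<close>] by simp
  qed (use o0 in auto)
  then show ?thesis by simp
qed

lemma infection_rate_ge: "j \<in> nbrs \<beta> i \<Longrightarrow> u \<le> 1 \<Longrightarrow> \<beta>min \<le> infection_rate i j u"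
  using mult_left_mono[of u 1 "\<beta> i j - \<beta>min"] beta_ge[of j i] by (simp add: infection_rate_def)

lemma infection_rate_le: "j \<in> nbrs \<beta> i \<Longrightarrow> 0 \<le> u \<Longrightarrow> infection_rate i j u \<le> \<beta> i j"
  using beta_ge[of j i] by (simp add: infection_rate_def)

lemma recovery_rate_ge: "0 \<le> u \<Longrightarrow> \<gamma>min \<le> recovery_rate i u"
  using gamma_ge[of i] by (simp add: recovery_rate_def)

lemma recovery_rate_le: "u \<le> 1 \<Longrightarrow> recovery_rate i u \<le> \<gamma> i"
  using mult_left_mono[of u 1 "\<gamma> i - \<gamma>min"] gamma_ge[of i] by (simp add: recovery_rate_def)

lemma infection_matrix_offdiag_nonneg:
  assumes "i \<noteq> j" "0 \<le> \<sigma> $ i" "\<omega> $ i \<le> 1"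
  shows "0 \<le> infection_matrix \<sigma> \<omega> i j"
proof (cases "j \<in> nbrs \<beta> i")
  case True
  then have "0 \<le> infection_rate i j (\<omega> $ i)"
    using infection_rate_ge[OF True assms(3)] beta_min_pos by linarith
  with True assms show ?thesis by (simp add: infection_matrix_def)
qed (use assms in \<open>simp add: infection_matrix_def\<close>)

lemma x_nonneg: "t \<ge> 0 \<Longrightarrow> 0 \<le> x t $ i"
  by (rule metzler_comparison_nonneg[OF Q_cont _ x_deriv_matrix])
    (use infection_matrix_offdiag_nonneg s_nonneg opn_le_1 x0 in auto)

lemma force_nonneg:
  assumes "t \<ge> 0"
  shows "0 \<le> force t i"
  unfolding force_def
proof (intro sum_nonneg mult_nonneg_nonneg)
  fix j assume "j \<in> nbrs \<beta> i"
  have "\<beta>min \<le> infection_rate i j (opn t $ i)"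
    by (rule infection_rate_ge[OF \<open>j \<in> nbrs \<beta> i\<close> opn_le_1[OF assms]])
  then show "0 \<le> infection_rate i j (opn t $ i)" using beta_min_pos by linarith
  show "0 \<le> x t $ j" using x_nonneg[OF assms] .
qed

lemma s_antimono:
  assumes "0 \<le> a" "a \<le> t"
  shows "s t $ i \<le> s a $ i"
proof -
  have "- s a $ i \<le> - s t $ i"
  proof (rule nonneg_derivative_imp_le_atLeast[OF _ _ \<open>a \<le> t\<close>])
    fix u assume "a \<le> u"
    then have "(s has_vector_derivative (\<chi> i. - s u $ i * force u i)) (at u within {a..})"
      using s_deriv[of u] assms by (auto intro: has_vector_derivative_within_subset)
    from has_real_derivative_vec_nth[OF this, of i]
    show "((\<lambda>t. - s t $ i) has_real_derivative s u $ i * force u i) (at u within {a..})"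
      by (auto intro!: derivative_eq_intros)
    show "0 \<le> s u $ i * force u i"
      using s_nonneg force_nonneg assms \<open>a \<le> u\<close> by simp
  qed
  then show ?thesis by simp
qed

lemma s_le_1: "t \<ge> 0 \<Longrightarrow> s t $ i \<le> 1"
  using s_antimono[of 0 t i] s0[of i] by auto

lemma opn_nonneg:
  assumes "t \<ge> 0"
  shows "0 \<le> opn t $ i"
  using unit_rows_flow_lower_bound[OF M_offdiag M_mult_one opn_deriv, of "\<lambda>_. 0" "\<lambda>_. 0" t i]
    s_le_1 o0 assms by simp

lemma s_plus_x_le_1: "t \<ge> 0 \<Longrightarrow> s t $ i + x t $ i \<le> 1"
proof -
  assume "t \<ge> 0"
  have "- (s 0 $ i + x 0 $ i) \<le> - (s t $ i + x t $ i)"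
  proof (rule nonneg_derivative_imp_le_atLeast[OF _ _ \<open>t \<ge> 0\<close>])
    fix u :: real assume "u \<ge> 0"
    show "((\<lambda>t. - (s t $ i + x t $ i)) has_real_derivative recovery_rate i (opn u $ i) * x u $ i)
        (at u within {0..})"
      using has_real_derivative_vec_nth[OF s_deriv, of u i] has_real_derivative_vec_nth[OF x_deriv, of u i]
        \<open>u \<ge> 0\<close> by (auto intro!: derivative_eq_intros)
    have "\<gamma>min \<le> recovery_rate i (opn u $ i)"
      by (rule recovery_rate_ge[OF opn_nonneg[OF \<open>u \<ge> 0\<close>]])
    then show "0 \<le> recovery_rate i (opn u $ i) * x u $ i"
      using gamma_min_pos x_nonneg[OF \<open>u \<ge> 0\<close>, of i] by simp
  qed
  then show ?thesis using sx0[of i] by simp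
qed

lemma x_le_1: "t \<ge> 0 \<Longrightarrow> x t $ i \<le> 1"
  using s_plus_x_le_1[of t i] s_nonneg[of t i] by linarith

section \<open>Convergence of the susceptibles and the opinions\<close>

definition se :: "real^'n" where "se = (\<chi> i. Inf ((\<lambda>t. s t $ i) ` {0..}))"

definition oe :: "real^'n" where "oe = matrix_inv M *v (1 - se)"

lemma se_le: "t \<ge> 0 \<Longrightarrow> se $ i \<le> s t $ i"
  unfolding se_def by (auto intro!: cInf_lower bdd_belowI[of _ 0] s_nonneg)

lemma se_nonneg: "0 \<le> se $ i"
  unfolding se_def by (auto intro!: cInf_greatest s_nonneg)

lemma se_le_1: "se $ i \<le> 1"
  using se_le[of 0 i] s0[of i] by auto

lemma s_tendsto: "(s \<longlongrightarrow> se) at_top"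
proof (rule vec_tendstoI, rule order_tendstoI)
  fix i and c assume "c < se $ i"
  show "\<forall>\<^sub>F t in at_top. c < s t $ i"
    using eventually_ge_at_top[of 0] by eventually_elim (rule less_le_trans[OF \<open>c < se $ i\<close> se_le])
next
  fix i and c assume "se $ i < c"
  moreover have "bdd_below ((\<lambda>t. s t $ i) ` {0..})"
    by (auto intro: bdd_belowI[of _ 0] s_nonneg)
  ultimately obtain t0 where "t0 \<ge> 0" "s t0 $ i < c"
    unfolding se_def by (auto simp: cInf_less_iff)
  show "\<forall>\<^sub>F t in at_top. s t $ i < c"
    using eventually_ge_at_top[of t0]
    by eventually_elim (rule le_less_trans[OF s_antimono[OF \<open>t0 \<ge> 0\<close>] \<open>s t0 $ i < c\<close>])
qed

lemma M_oe: "M *v oe = 1 - se"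
  unfolding oe_def M_def by (rule laplacian_plus_id_mult_inv) (rule abar_nonneg)

lemma oe_nonneg: "0 \<le> oe $ i"
  by (rule laplacian_plus_id_min_principle[of abar oe "1 - se"])
    (use abar_nonneg M_oe se_le_1 in \<open>auto simp: M_def\<close>)

lemma oe_le_1: "oe $ i \<le> 1"
proof -
  have "M *v (1 - oe) = se"
    by (simp add: matrix_vector_mult_diff_distrib M_mult_one M_oe)
  then have "0 \<le> (1 - oe) $ i"
    by (intro laplacian_plus_id_min_principle[of abar "1 - oe" se])
      (use abar_nonneg se_nonneg in \<open>auto simp: M_def\<close>)
  then show ?thesis by simp
qed

lemma opn_error_deriv:
  "t \<ge> 0 \<Longrightarrow> ((\<lambda>t. opn t - oe) has_vector_derivative (se - s t) - M *v (opn t - oe)) (at t within {0..})"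
  by (rule has_vector_derivative_eq_rhs[OF has_vector_derivative_diff[OF opn_deriv has_vector_derivative_const]])
    (auto simp: matrix_vector_mult_diff_distrib M_oe)

lemma opn_sub_oe_le_exp:
  assumes "t \<ge> 0"
  shows "opn t $ i - oe $ i \<le> exp (- t)"
proof -
  have "0 \<le> (oe - opn t) $ i + exp (- t)"
  proof (rule unit_rows_flow_lower_bound[OF M_offdiag M_mult_one _ _ _ _ assms])
    fix t :: real assume "t \<ge> 0"
    show "((\<lambda>t. oe - opn t) has_vector_derivative (s t - se) - M *v (oe - opn t)) (at t within {0..})"
      using has_vector_derivative_diff[OF has_vector_derivative_const opn_deriv[OF \<open>t \<ge> 0\<close>]]
      by (rule has_vector_derivative_eq_rhs) (simp add: matrix_vector_mult_diff_distrib M_oe)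
    show "((\<lambda>t. exp (- t)) has_real_derivative - exp (- t)) (at t within {0..})"
      by (auto intro!: derivative_eq_intros)
    show "0 \<le> (s t - se) $ i + exp (- t) + - exp (- t)" for i
      using se_le[OF \<open>t \<ge> 0\<close>] by simp
  next
    show "0 \<le> (oe - opn 0) $ i + exp (- 0 :: real)" for i
      using oe_nonneg[of i] o0[of i] by simp
  qed
  then show ?thesis by simp
qed

lemma oe_sub_opn_le:
  assumes "0 \<le> T" "T \<le> t"
    and \<phi>_der: "\<And>t. t \<ge> T \<Longrightarrow> (\<phi> has_real_derivative \<phi>' t) (at t within {T..})"
    and forcing: "\<And>t i. t \<ge> T \<Longrightarrow> s t $ i - se $ i \<le> \<phi> t + \<phi>' t"
    and init: "\<And>i. oe $ i - opn T $ i \<le> \<phi> T"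
  shows "oe $ i - opn t $ i \<le> \<phi> t"
proof -
  have "0 \<le> (opn t - oe) $ i + \<phi> t"
  proof (rule unit_rows_flow_lower_bound[OF M_offdiag M_mult_one _ \<phi>_der _ _ \<open>T \<le> t\<close>])
    fix t assume "t \<ge> T"
    then show "((\<lambda>t. opn t - oe) has_vector_derivative (se - s t) - M *v (opn t - oe)) (at t within {T..})"
      using opn_error_deriv[of t] \<open>0 \<le> T\<close> by (auto intro: has_vector_derivative_within_subset)
    show "0 \<le> (se - s t) $ i + \<phi> t + \<phi>' t" for i
      using forcing[OF \<open>t \<ge> T\<close>, of i] by simp
  next
    show "0 \<le> (opn T - oe) $ i + \<phi> T" for i
      using init[of i] by simp
  qed
  then show ?thesis by simp
qed

lemma opn_tendsto: "(opn \<longlongrightarrow> oe) at_top"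
proof (rule vec_tendstoI, rule order_tendstoI)
  fix i and c assume "oe $ i < c"
  moreover have "((\<lambda>t::real. exp (- t)) \<longlongrightarrow> 0) at_top"
    using tendsto_exp_neg_mult_at_top[of 1] by simp
  ultimately have "\<forall>\<^sub>F t in at_top. exp (- t) < c - oe $ i"
    by (intro order_tendstoD) auto
  then show "\<forall>\<^sub>F t in at_top. opn t $ i < c"
    using eventually_ge_at_top[of 0]
  proof eventually_elim
    case (elim t)
    then show ?case using opn_sub_oe_le_exp[of t i] by linarith
  qed
next
  fix i and c assume "c < oe $ i"
  define d where "d = (oe $ i - c) / 2"
  have "d > 0" using \<open>c < oe $ i\<close> by (simp add: d_def)
  have "\<forall>\<^sub>F t in at_top. \<forall>j. s t $ j < se $ j + d"
  proof (rule eventually_all_finite)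
    fix j show "\<forall>\<^sub>F t in at_top. s t $ j < se $ j + d"
      by (rule order_tendstoD(2)[OF tendsto_vec_nth[OF s_tendsto]]) (use \<open>d > 0\<close> in simp)
  qed
  then obtain T where "T \<ge> 0" and T: "\<And>j. s T $ j < se $ j + d"
    unfolding eventually_at_top_linorder by (meson linear order_trans)
  have lower: "oe $ i - opn t $ i \<le> d + exp T * exp (- t)" if "t \<ge> T" for t
  proof (rule oe_sub_opn_le[OF \<open>T \<ge> 0\<close> that])
    fix t assume "t \<ge> T"
    show "((\<lambda>t. d + exp T * exp (- t)) has_real_derivative - (exp T * exp (- t))) (at t within {T..})"
      by (auto intro!: derivative_eq_intros)
    show "s t $ j - se $ j \<le> d + exp T * exp (- t) + - (exp T * exp (- t))" for j
      using s_antimono[OF \<open>T \<ge> 0\<close> \<open>t \<ge> T\<close>, of j] T[of j] by simp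
  next
    fix j show "oe $ j - opn T $ j \<le> d + exp T * exp (- T)"
      using oe_le_1[of j] opn_nonneg[OF \<open>T \<ge> 0\<close>, of j] \<open>d > 0\<close> by (simp add: exp_minus)
  qed
  have "((\<lambda>t. exp T * exp (- t)) \<longlongrightarrow> exp T * 0) at_top"
    using tendsto_exp_neg_mult_at_top[of 1] by (intro tendsto_mult tendsto_const) simp
  then have "\<forall>\<^sub>F t in at_top. exp T * exp (- t) < d"
    using \<open>d > 0\<close> by (intro order_tendstoD) auto
  then show "\<forall>\<^sub>F t in at_top. c < opn t $ i"
    using eventually_ge_at_top[of T]
  proof eventually_elim
    case (elim t)
    then show ?case using lower[OF elim(2)] unfolding d_def by argo
  qed
qed

section \<open>Extinction of the infection\<close>

definition extinct :: "'n set" where "extinct = {j. \<forall>\<^sub>F t in at_top. x t $ j = 0}"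

lemma x_pos_persists:
  assumes "0 \<le> a" "a \<le> t" "0 < x a $ j"
  shows "0 < x t $ j"
proof -
  define h where "h u = x u $ j * exp (\<gamma> j * (u - a))" for u
  have "h a \<le> h t"
  proof (rule nonneg_derivative_imp_le_atLeast[OF _ _ \<open>a \<le> t\<close>])
    fix u assume "a \<le> u"
    then have "(x has_vector_derivative (\<chi> i. s u $ i * force u i - recovery_rate i (opn u $ i) * x u $ i))
        (at u within {a..})"
      using x_deriv[of u] assms by (auto intro: has_vector_derivative_within_subset)
    from has_real_derivative_vec_nth[OF this, of j]
    show "(h has_real_derivative
        (s u $ j * force u j + (\<gamma> j - recovery_rate j (opn u $ j)) * x u $ j) * exp (\<gamma> j * (u - a)))
        (at u within {a..})"
      unfolding h_def by (auto intro!: derivative_eq_intros simp: algebra_simps)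
    have "0 \<le> u" using assms \<open>a \<le> u\<close> by simp
    then show "0 \<le> (s u $ j * force u j + (\<gamma> j - recovery_rate j (opn u $ j)) * x u $ j) * exp (\<gamma> j * (u - a))"
      using s_nonneg force_nonneg x_nonneg recovery_rate_le[OF opn_le_1] by simp
  qed
  then have "0 < x t $ j * exp (\<gamma> j * (t - a))" using assms by (simp add: h_def)
  then show ?thesis by (simp add: zero_less_mult_iff)
qed

lemma extinction_settles: "\<forall>\<^sub>F t in at_top. \<forall>j. x t $ j = 0 \<longleftrightarrow> j \<in> extinct"
proof (rule eventually_all_finite)
  fix j
  show "\<forall>\<^sub>F t in at_top. x t $ j = 0 \<longleftrightarrow> j \<in> extinct"
  proof (cases "j \<in> extinct")
    case True
    then show ?thesis by (simp add: extinct_def)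
  next
    case False
    then have "\<not> (\<forall>t\<ge>0. x t $ j = 0)"
      unfolding extinct_def eventually_at_top_linorder by blast
    then obtain a where "0 \<le> a" "x a $ j \<noteq> 0" by blast
    then have "0 < x a $ j" using x_nonneg[of a j] by simp
    have "\<forall>\<^sub>F t in at_top. 0 < x t $ j"
      using eventually_ge_at_top[of a]
      by eventually_elim (rule x_pos_persists[OF \<open>0 \<le> a\<close> _ \<open>0 < x a $ j\<close>])
    then show ?thesis by eventually_elim (use False in simp)
  qed
qed

lemma infected_mass_not_eventually_ge:
  assumes "c > 0"
  shows "\<not> (\<forall>\<^sub>F t in at_top. c \<le> (\<Sum>i\<in>UNIV. x t $ i))"
proof
  assume "\<forall>\<^sub>F t in at_top. c \<le> (\<Sum>i\<in>UNIV. x t $ i)"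
  then obtain T where "T \<ge> 0" and mass: "\<And>t. t \<ge> T \<Longrightarrow> c \<le> (\<Sum>i\<in>UNIV. x t $ i)"
    unfolding eventually_at_top_linorder by (metis max.cobounded1 max.cobounded2 order_trans)
  \<comment> \<open>The total s + x decreases at least at the rate \<gamma>min c, yet stays nonnegative.\<close>
  define V where "V t = (\<Sum>i\<in>UNIV. s t $ i + x t $ i)" for t
  define r where "r = \<gamma>min * c"
  have "r > 0" using gamma_min_pos assms by (simp add: r_def)
  have decay: "- V T - r * T \<le> - V t - r * t" if "t \<ge> T" for t
  proof (rule nonneg_derivative_imp_le_atLeast[OF _ _ that])
    fix u assume "T \<le> u"
    then have "u \<ge> 0" using \<open>T \<ge> 0\<close> by simp
    have "((\<lambda>t. s t $ i + x t $ i) has_real_derivative - (recovery_rate i (opn u $ i) * x u $ i))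
        (at u within {T..})" for i
      using has_real_derivative_vec_nth[OF s_deriv[OF \<open>u \<ge> 0\<close>], of i]
        has_real_derivative_vec_nth[OF x_deriv[OF \<open>u \<ge> 0\<close>], of i] \<open>T \<ge> 0\<close>
      by (auto intro!: derivative_eq_intros intro: DERIV_subset)
    then have "(V has_real_derivative (\<Sum>i\<in>UNIV. - (recovery_rate i (opn u $ i) * x u $ i)))
        (at u within {T..})"
      unfolding V_def by (rule DERIV_sum)
    then show "((\<lambda>t. - V t - r * t) has_real_derivative
        (\<Sum>i\<in>UNIV. recovery_rate i (opn u $ i) * x u $ i) - r) (at u within {T..})"
      by (auto intro!: derivative_eq_intros simp: sum_negf)
    have "r \<le> \<gamma>min * (\<Sum>i\<in>UNIV. x u $ i)"
      using mass[OF \<open>T \<le> u\<close>] gamma_min_pos by (simp add: r_def)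
    also have "\<dots> \<le> (\<Sum>i\<in>UNIV. recovery_rate i (opn u $ i) * x u $ i)"
      unfolding sum_distrib_left
      using recovery_rate_ge[OF opn_nonneg[OF \<open>u \<ge> 0\<close>]] x_nonneg[OF \<open>u \<ge> 0\<close>]
      by (intro sum_mono mult_right_mono) auto
    finally show "0 \<le> (\<Sum>i\<in>UNIV. recovery_rate i (opn u $ i) * x u $ i) - r" by simp
  qed
  define t where "t = T + (V T + 1) / r"
  have "V T \<ge> 0" unfolding V_def using s_nonneg x_nonneg \<open>T \<ge> 0\<close> by (simp add: sum_nonneg)
  then have "t \<ge> T" using \<open>r > 0\<close> by (simp add: t_def)
  then have "V t \<le> V T - r * (t - T)" using decay[of t] by (simp add: algebra_simps)
  also have "\<dots> = -1" using \<open>r > 0\<close> by (simp add: t_def)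
  finally have "V t < 0" by simp
  moreover have "V t \<ge> 0" unfolding V_def using s_nonneg x_nonneg \<open>t \<ge> T\<close> \<open>T \<ge> 0\<close> by (simp add: sum_nonneg)
  ultimately show False by simp
qed

abbreviation Qlim :: "'n \<Rightarrow> 'n \<Rightarrow> real" where "Qlim \<equiv> infection_matrix se oe"

lemma Q_tendsto: "((\<lambda>t. Q t i j) \<longlongrightarrow> Qlim i j) at_top"
  unfolding infection_matrix_def infection_rate_def recovery_rate_def
  by (cases "j \<in> nbrs \<beta> i"; cases "i = j"; simp;
      intro tendsto_intros tendsto_vec_nth s_tendsto opn_tendsto)

lemma infection_term_lower_bound:
  assumes "0 \<le> \<tau>" "0 \<le> c" and rel: "\<And>i j. \<beta> i j - \<beta>min \<le> c * \<beta>min"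
  shows "(1 - c * exp (- \<tau>)) * (if j \<in> nbrs \<beta> i then se $ i * infection_rate i j (oe $ i) else 0)
      \<le> (if j \<in> nbrs \<beta> i then s \<tau> $ i * infection_rate i j (opn \<tau> $ i) else 0)"
proof (cases "j \<in> nbrs \<beta> i")
  case True
  define \<delta> where "\<delta> = exp (- \<tau>)"
  have "0 \<le> \<delta>" by (simp add: \<delta>_def)
  have rate_e: "\<beta>min \<le> infection_rate i j (oe $ i)" by (rule infection_rate_ge[OF True oe_le_1])
  have "(\<beta> i j - \<beta>min) * (opn \<tau> $ i - oe $ i) \<le> (\<beta> i j - \<beta>min) * \<delta>"
    using beta_ge[OF True] opn_sub_oe_le_exp[OF \<open>0 \<le> \<tau>\<close>, of i] unfolding \<delta>_def
    by (intro mult_left_mono) auto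
  also have "\<dots> \<le> c * infection_rate i j (oe $ i) * \<delta>"
  proof (intro mult_right_mono \<open>0 \<le> \<delta>\<close>)
    have "\<beta> i j - \<beta>min \<le> c * \<beta>min" by (rule rel)
    also have "\<dots> \<le> c * infection_rate i j (oe $ i)" by (rule mult_left_mono[OF rate_e \<open>0 \<le> c\<close>])
    finally show "\<beta> i j - \<beta>min \<le> c * infection_rate i j (oe $ i)" .
  qed
  finally have "(1 - c * \<delta>) * infection_rate i j (oe $ i) \<le> infection_rate i j (opn \<tau> $ i)"
    by (simp add: infection_rate_def algebra_simps)
  then have "se $ i * ((1 - c * \<delta>) * infection_rate i j (oe $ i)) \<le> se $ i * infection_rate i j (opn \<tau> $ i)"
    by (rule mult_left_mono[OF _ se_nonneg])
  also have "\<dots> \<le> s \<tau> $ i * infection_rate i j (opn \<tau> $ i)"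
    using se_le[OF \<open>0 \<le> \<tau>\<close>, of i] infection_rate_ge[OF True opn_le_1[OF \<open>0 \<le> \<tau>\<close>, of i]] beta_min_pos
    by (intro mult_right_mono) auto
  finally show ?thesis using True by (simp add: \<delta>_def algebra_simps)
qed simp

lemma recovery_rate_increment:
  assumes "0 \<le> \<tau>"
  shows "recovery_rate i (opn \<tau> $ i) \<le> recovery_rate i (oe $ i) + (\<gamma> i - \<gamma>min) * exp (- \<tau>)"
proof -
  have "(\<gamma> i - \<gamma>min) * (opn \<tau> $ i - oe $ i) \<le> (\<gamma> i - \<gamma>min) * exp (- \<tau>)"
    using gamma_ge[of i] opn_sub_oe_le_exp[OF assms, of i] by (intro mult_left_mono) auto
  then show ?thesis by (simp add: recovery_rate_def algebra_simps)
qed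

text \<open>The infection rates decrease and the recovery rates increase with the opinion, while
  opn t exceeds oe by at most e^(-t) and s t stays above se.\<close>
lemma infection_matrix_lower_bound:
  obtains c \<kappa> where "0 \<le> \<kappa>"
    "\<And>\<tau> i j. \<tau> \<ge> 0 \<Longrightarrow> (1 - c * exp (- \<tau>)) * Qlim i j - \<kappa> * exp (- \<tau>) * of_bool (i = j) \<le> Q \<tau> i j"
proof -
  define B where "B = (\<Sum>i\<in>UNIV. \<Sum>j\<in>UNIV. \<beta> i j)"
  define G where "G = (\<Sum>i\<in>UNIV. \<gamma> i)"
  have beta_le: "\<beta> i j \<le> B" for i j
    unfolding B_def using beta_nonneg
    by (intro order_trans[OF member_le_sum member_le_sum[where f = "\<lambda>i. \<Sum>j\<in>UNIV. \<beta> i j"]])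
      (auto intro: sum_nonneg)
  have gamma_le: "\<gamma> i \<le> G" for i
    unfolding G_def using gamma_ge gamma_min_pos
    by (intro member_le_sum) (auto intro: order_trans[OF less_imp_le])
  define c where "c = B / \<beta>min"
  have "0 \<le> c" using beta_le[of undefined undefined] beta_nonneg beta_min_pos
    by (simp add: c_def order_trans[OF _ beta_le])
  have rel: "\<beta> i j - \<beta>min \<le> c * \<beta>min" for i j
    using beta_le[of i j] beta_min_pos by (simp add: c_def)
  have "0 \<le> G" using gamma_le[of undefined] gamma_ge gamma_min_pos by (meson less_le_trans order_trans less_imp_le)
  have "(1 - c * exp (- \<tau>)) * Qlim i j - (c + 1) * G * exp (- \<tau>) * of_bool (i = j) \<le> Q \<tau> i j"
    if "\<tau> \<ge> 0" for \<tau> i j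
  proof -
    define \<delta> where "\<delta> = exp (- \<tau>)"
    have "0 \<le> \<delta>" by (simp add: \<delta>_def)
    have rec: "recovery_rate i (opn \<tau> $ i) \<le> recovery_rate i (oe $ i) + G * \<delta>"
      using recovery_rate_increment[OF that, of i, folded \<delta>_def] gamma_le[of i] gamma_min_pos
        mult_right_mono[OF _ \<open>0 \<le> \<delta>\<close>, of "\<gamma> i - \<gamma>min" G] by linarith
    have "c * \<delta> * recovery_rate i (oe $ i) \<le> c * \<delta> * G"
      using recovery_rate_le[OF oe_le_1[of i], of i] gamma_le[of i] \<open>0 \<le> c\<close> \<open>0 \<le> \<delta>\<close>
      by (intro mult_left_mono) auto
    with infection_term_lower_bound[OF that \<open>0 \<le> c\<close> rel, where i = i and j = j, folded \<delta>_def] rec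
    show ?thesis
      unfolding infection_matrix_def \<delta>_def[symmetric] by (cases "i = j") (auto simp: algebra_simps)
  qed
  with \<open>0 \<le> c\<close> \<open>0 \<le> G\<close> show ?thesis by (intro that[of "(c + 1) * G" c]) auto
qed

abbreviation Qdec :: "real \<Rightarrow> 'n \<Rightarrow> 'n \<Rightarrow> real" where "Qdec t \<equiv> decouple extinct (Q t)"

abbreviation Qdec_lim :: "'n \<Rightarrow> 'n \<Rightarrow> real" where "Qdec_lim \<equiv> decouple extinct Qlim"

lemma decouple_offdiag_nonneg:
  "i \<noteq> j \<Longrightarrow> 0 \<le> \<sigma> $ i \<Longrightarrow> \<omega> $ i \<le> 1 \<Longrightarrow> 0 \<le> decouple extinct (infection_matrix \<sigma> \<omega>) i j"
  using infection_matrix_offdiag_nonneg by (simp add: decouple_def)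

lemma decoupled_column_lower_bound:
  assumes w_nonneg: "\<And>i. 0 \<le> w $ i"
    and w_col: "\<And>j. 0 \<le> (\<Sum>i\<in>UNIV. w $ i * Qdec_lim i j)"
  obtains \<kappa> where "0 \<le> \<kappa>"
    "\<forall>\<^sub>F \<tau> in at_top. \<forall>j. - \<kappa> * exp (- \<tau>) * w $ j \<le> (\<Sum>i\<in>UNIV. w $ i * Qdec \<tau> i j)"
proof -
  obtain c \<kappa> where "0 \<le> \<kappa>" and lower:
    "\<And>\<tau> i j. \<tau> \<ge> 0 \<Longrightarrow> (1 - c * exp (- \<tau>)) * Qlim i j - \<kappa> * exp (- \<tau>) * of_bool (i = j) \<le> Q \<tau> i j"
    by (rule infection_matrix_lower_bound) blast
  have "((\<lambda>\<tau>. c * exp (- \<tau>)) \<longlongrightarrow> c * 0) at_top"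
    using tendsto_exp_neg_mult_at_top[of 1] by (intro tendsto_mult tendsto_const) simp
  then have "\<forall>\<^sub>F \<tau> in at_top. c * exp (- \<tau>) < 1"
    by (intro order_tendstoD) auto
  then have "\<forall>\<^sub>F \<tau> in at_top. \<forall>j. - \<kappa> * exp (- \<tau>) * w $ j \<le> (\<Sum>i\<in>UNIV. w $ i * Qdec \<tau> i j)"
    using eventually_ge_at_top[of 0]
  proof eventually_elim
    case (elim \<tau>)
    show ?case
    proof
      fix j
      show "- \<kappa> * exp (- \<tau>) * w $ j \<le> (\<Sum>i\<in>UNIV. w $ i * Qdec \<tau> i j)"
      proof (cases "j \<in> extinct")
        case True
        then have "w $ j = 0" using w_col[of j] w_nonneg[of j] by (simp add: decouple_column)
        with True show ?thesis by (simp add: decouple_column)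
      next
        case False
        have "(\<Sum>i\<in>UNIV. w $ i * (\<kappa> * exp (- \<tau>) * of_bool (i = j))) = \<kappa> * exp (- \<tau>) * w $ j"
          by (simp add: of_bool_def if_distrib[of "\<lambda>c. _ * c"] cong: if_cong)
        then have "(1 - c * exp (- \<tau>)) * (\<Sum>i\<in>UNIV. w $ i * Qlim i j) - \<kappa> * exp (- \<tau>) * w $ j
            = (\<Sum>i\<in>UNIV. w $ i * ((1 - c * exp (- \<tau>)) * Qlim i j - \<kappa> * exp (- \<tau>) * of_bool (i = j)))"
          by (simp add: right_diff_distrib sum_subtractf sum_distrib_left mult.left_commute)
        also have "\<dots> \<le> (\<Sum>i\<in>UNIV. w $ i * Q \<tau> i j)"
          using lower elim w_nonneg by (intro sum_mono mult_left_mono) auto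
        finally have "(1 - c * exp (- \<tau>)) * (\<Sum>i\<in>UNIV. w $ i * Qlim i j) - \<kappa> * exp (- \<tau>) * w $ j
            \<le> (\<Sum>i\<in>UNIV. w $ i * Qdec \<tau> i j)"
          using False by (simp add: decouple_def)
        moreover have "0 \<le> (1 - c * exp (- \<tau>)) * (\<Sum>i\<in>UNIV. w $ i * Qlim i j)"
          using w_col[of j] False elim by (simp add: decouple_def)
        ultimately show ?thesis by simp
      qed
    qed
  qed
  with \<open>0 \<le> \<kappa>\<close> show ?thesis by (rule that)
qed

lemma weighted_infection_persists:
  assumes w_nonneg: "\<And>i. 0 \<le> w $ i"
    and w_col: "\<And>j. 0 \<le> (\<Sum>i\<in>UNIV. w $ i * Qdec_lim i j)"
    and "0 < w $ k" "k \<notin> extinct"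
  obtains c where "0 < c" "\<forall>\<^sub>F \<tau> in at_top. c \<le> (\<Sum>i\<in>UNIV. w $ i * x \<tau> $ i)"
proof -
  obtain \<kappa> where "0 \<le> \<kappa>" and col:
    "\<forall>\<^sub>F \<tau> in at_top. \<forall>j. - \<kappa> * exp (- \<tau>) * w $ j \<le> (\<Sum>i\<in>UNIV. w $ i * Qdec \<tau> i j)"
    using decoupled_column_lower_bound[OF w_nonneg w_col] by blast
  obtain T where T: "\<And>\<tau>. \<tau> \<ge> T \<Longrightarrow>
      (\<forall>j. - \<kappa> * exp (- \<tau>) * w $ j \<le> (\<Sum>i\<in>UNIV. w $ i * Qdec \<tau> i j))
      \<and> (\<forall>j. x \<tau> $ j = 0 \<longleftrightarrow> j \<in> extinct) \<and> 0 \<le> \<tau>"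
    using eventually_conj[OF col eventually_conj[OF extinction_settles eventually_ge_at_top[of 0]]]
    unfolding eventually_at_top_linorder by blast
  have "T \<ge> 0" using T[of T] by simp
  define y where "y \<tau> = (\<Sum>i\<in>UNIV. w $ i * x \<tau> $ i)" for \<tau>
  have growth: "y T * exp (- \<kappa> * exp (- T)) \<le> y \<tau>" if "\<tau> \<ge> T" for \<tau>
  proof (rule growth_lower_bound_exp_neg[OF _ _ \<open>0 \<le> \<kappa>\<close> _ that])
    fix \<tau> assume "\<tau> \<ge> T"
    then have "\<tau> \<ge> 0" using \<open>T \<ge> 0\<close> by simp
    have "(x has_vector_derivative (\<chi> i. \<Sum>j\<in>UNIV. Q \<tau> i j * x \<tau> $ j)) (at \<tau> within {T..})"
      using x_deriv_matrix[OF \<open>\<tau> \<ge> 0\<close>] \<open>T \<ge> 0\<close> by (auto intro: has_vector_derivative_within_subset)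
    from has_real_derivative_vec_nth[OF this]
    show "(y has_real_derivative (\<Sum>i\<in>UNIV. w $ i * (\<Sum>j\<in>UNIV. Q \<tau> i j * x \<tau> $ j))) (at \<tau> within {T..})"
      unfolding y_def by (auto intro!: DERIV_sum DERIV_cmult)
    have "(\<Sum>i\<in>UNIV. w $ i * (\<Sum>j\<in>UNIV. Q \<tau> i j * x \<tau> $ j))
        = (\<Sum>i\<in>UNIV. w $ i * (\<Sum>j\<in>UNIV. Qdec \<tau> i j * x \<tau> $ j))"
      using T[OF \<open>\<tau> \<ge> T\<close>] by (simp add: decouple_mult)
    also have "\<dots> = (\<Sum>i\<in>UNIV. \<Sum>j\<in>UNIV. x \<tau> $ j * (w $ i * Qdec \<tau> i j))"
      by (simp add: sum_distrib_left ac_simps)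
    also have "\<dots> = (\<Sum>j\<in>UNIV. \<Sum>i\<in>UNIV. x \<tau> $ j * (w $ i * Qdec \<tau> i j))"
      by (rule sum.swap)
    also have "\<dots> = (\<Sum>j\<in>UNIV. x \<tau> $ j * (\<Sum>i\<in>UNIV. w $ i * Qdec \<tau> i j))"
      by (simp add: sum_distrib_left)
    also have "\<dots> \<ge> (\<Sum>j\<in>UNIV. x \<tau> $ j * (- \<kappa> * exp (- \<tau>) * w $ j))"
      using T[OF \<open>\<tau> \<ge> T\<close>] x_nonneg[OF \<open>\<tau> \<ge> 0\<close>] by (intro sum_mono mult_left_mono) auto
    finally show "- \<kappa> * exp (- \<tau>) * y \<tau> \<le> (\<Sum>i\<in>UNIV. w $ i * (\<Sum>j\<in>UNIV. Q \<tau> i j * x \<tau> $ j))"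
      by (simp add: y_def sum_distrib_left algebra_simps)
  next
    show "0 \<le> y T" unfolding y_def using w_nonneg x_nonneg \<open>T \<ge> 0\<close> by (simp add: sum_nonneg)
  qed
  have "0 < x T $ k" using T[of T] x_nonneg[OF \<open>T \<ge> 0\<close>, of k] \<open>k \<notin> extinct\<close> by auto
  then have "0 < w $ k * x T $ k" using \<open>0 < w $ k\<close> by simp
  also have "\<dots> \<le> y T"
    unfolding y_def using w_nonneg x_nonneg \<open>T \<ge> 0\<close>
    by (intro member_le_sum[where f = "\<lambda>i. w $ i * x T $ i"]) auto
  finally have "0 < y T * exp (- \<kappa> * exp (- T))" by simp
  moreover have "\<forall>\<^sub>F \<tau> in at_top. y T * exp (- \<kappa> * exp (- T)) \<le> y \<tau>"
    using eventually_ge_at_top[of T] by eventually_elim (rule growth)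
  ultimately show ?thesis unfolding y_def by (rule that)
qed

text \<open>This excludes the second case of Ville's alternative for the decoupled limit matrix:
  the w-weighted infection would stay bounded away from 0, but then the total mass of s + x
  would decrease without bound.\<close>
lemma left_subinvariant_vector_zero:
  assumes w_nonneg: "\<And>i. 0 \<le> w $ i"
    and w_col: "\<And>j. 0 \<le> (\<Sum>i\<in>UNIV. w $ i * Qdec_lim i j)"
  shows "w = 0"
proof (rule ccontr)
  assume "w \<noteq> 0"
  then obtain k where "w $ k \<noteq> 0" by (auto simp: vec_eq_iff)
  then have "0 < w $ k" using w_nonneg[of k] by simp
  have "k \<notin> extinct"
    using w_col[of k] w_nonneg[of k] \<open>w $ k \<noteq> 0\<close> by (auto simp: decouple_column)
  obtain c where "0 < c" and lower: "\<forall>\<^sub>F \<tau> in at_top. c \<le> (\<Sum>i\<in>UNIV. w $ i * x \<tau> $ i)"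
    using weighted_infection_persists[OF w_nonneg w_col \<open>0 < w $ k\<close> \<open>k \<notin> extinct\<close>] by blast
  define W where "W = (\<Sum>i\<in>UNIV. w $ i)"
  have w_le: "w $ i \<le> W" for i unfolding W_def using w_nonneg by (intro member_le_sum) auto
  then have "0 < W" using \<open>0 < w $ k\<close> by (meson less_le_trans)
  have "\<forall>\<^sub>F \<tau> in at_top. c / W \<le> (\<Sum>i\<in>UNIV. x \<tau> $ i)"
    using lower eventually_ge_at_top[of 0]
  proof eventually_elim
    case (elim \<tau>)
    have "(\<Sum>i\<in>UNIV. w $ i * x \<tau> $ i) \<le> W * (\<Sum>i\<in>UNIV. x \<tau> $ i)"
      unfolding sum_distrib_left using w_le x_nonneg[OF elim(2)]
      by (intro sum_mono mult_right_mono) auto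
    with elim(1) have "c \<le> W * (\<Sum>i\<in>UNIV. x \<tau> $ i)" by linarith
    then show ?case using \<open>0 < W\<close> by (simp add: pos_divide_le_eq mult.commute)
  qed
  moreover have "0 < c / W" using \<open>0 < c\<close> \<open>0 < W\<close> by simp
  ultimately show False using infected_mass_not_eventually_ge by blast
qed

lemma decay_vector_exists:
  obtains v :: "real^'n" where "\<And>i. 0 < v $ i" "\<And>i. (\<Sum>j\<in>UNIV. Qdec_lim i j * v $ j) < 0"
proof (rule ville_alternative[of Qdec_lim])
  fix v :: "real^'n"
  assume v_nonneg: "\<And>i. 0 \<le> v $ i" and neg: "\<And>i. (\<Sum>j\<in>UNIV. Qdec_lim i j * v $ j) < 0"
  have "0 < v $ i" for i
  proof (rule ccontr)
    assume "\<not> 0 < v $ i"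
    then have "v $ i = 0" using v_nonneg[of i] by simp
    then have "0 \<le> (\<Sum>j\<in>UNIV. Qdec_lim i j * v $ j)"
    proof (intro sum_nonneg)
      fix j
      show "0 \<le> Qdec_lim i j * v $ j"
      proof (cases "j = i")
        case False
        then show ?thesis
          using v_nonneg[of j] decouple_offdiag_nonneg[OF _ se_nonneg oe_le_1, of i j] by simp
      qed (simp add: \<open>v $ i = 0\<close>)
    qed
    with neg[of i] show False by simp
  qed
  from this neg show thesis by (rule that)
next
  fix w :: "real^'n"
  assume "\<And>i. 0 \<le> w $ i" "w \<noteq> 0" "\<And>j. 0 \<le> (\<Sum>i\<in>UNIV. w $ i * Qdec_lim i j)"
  then show thesis using left_subinvariant_vector_zero by blast
qed

lemma x_le_exp_vector:
  fixes v :: "real^'n"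
  assumes "0 \<le> T" and zero: "\<And>t j. T \<le> t \<Longrightarrow> j \<in> extinct \<Longrightarrow> x t $ j = 0"
    and v: "\<And>i. 0 < v $ i"
    and sub: "\<And>t i. T \<le> t \<Longrightarrow> (\<Sum>j\<in>UNIV. Qdec t i j * v $ j) \<le> - \<epsilon> * v $ i"
    and "T \<le> t"
  shows "x t $ i \<le> (\<Sum>k\<in>UNIV. x T $ k / v $ k) * exp (- \<epsilon> * (t - T)) * v $ i"
proof (rule metzler_exp_bound[where P = Qdec and y' = "\<lambda>t. \<chi> i. \<Sum>j\<in>UNIV. Q t i j * x t $ j"])
  fix i j
  show "continuous_on {T..} (\<lambda>t. Qdec t i j)"
    unfolding decouple_def using \<open>0 \<le> T\<close>
    by (cases "j \<in> extinct") (auto intro: continuous_on_subset[OF Q_cont])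
next
  fix t and i j :: 'n assume "T \<le> t" "i \<noteq> j"
  then show "0 \<le> Qdec t i j"
    using decouple_offdiag_nonneg s_nonneg opn_le_1 \<open>0 \<le> T\<close> by simp
next
  fix t assume "T \<le> t"
  then show "(x has_vector_derivative (\<chi> i. \<Sum>j\<in>UNIV. Q t i j * x t $ j)) (at t within {T..})"
    using x_deriv_matrix[of t] \<open>0 \<le> T\<close> by (auto intro: has_vector_derivative_within_subset)
next
  fix t and i :: 'n assume "T \<le> t"
  then show "(\<chi> i. \<Sum>j\<in>UNIV. Q t i j * x t $ j) $ i \<le> (\<Sum>j\<in>UNIV. Qdec t i j * x t $ j)"
    using zero by (simp add: decouple_mult)
qed (use v sub x_nonneg \<open>0 \<le> T\<close> \<open>T \<le> t\<close> in auto)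

lemma decay_rate_exists:
  obtains v :: "real^'n" and \<epsilon> where "\<And>i. 0 < v $ i" "0 < \<epsilon>" "\<epsilon> \<le> 1/2"
    "\<forall>\<^sub>F t in at_top. \<forall>i. (\<Sum>j\<in>UNIV. Qdec t i j * v $ j) < - \<epsilon> * v $ i"
proof -
  obtain v where v: "\<And>i. 0 < v $ i" and neg: "\<And>i. (\<Sum>j\<in>UNIV. Qdec_lim i j * v $ j) < 0"
    by (rule decay_vector_exists) blast
  have "\<forall>\<^sub>F \<epsilon> in at_right 0. \<forall>i. (\<Sum>j\<in>UNIV. Qdec_lim i j * v $ j) < - \<epsilon> * v $ i"
  proof (rule eventually_all_finite)
    fix i
    have "((\<lambda>\<epsilon>. - \<epsilon> * v $ i) \<longlongrightarrow> - 0 * v $ i) (at_right 0)"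
      by (intro tendsto_intros)
    with neg[of i] show "\<forall>\<^sub>F \<epsilon> in at_right 0. (\<Sum>j\<in>UNIV. Qdec_lim i j * v $ j) < - \<epsilon> * v $ i"
      by (intro order_tendstoD(1)) auto
  qed
  moreover have "\<forall>\<^sub>F \<epsilon> in at_right 0. 0 < \<epsilon> \<and> \<epsilon> \<le> (1/2::real)"
    unfolding eventually_at_right_field by (intro exI[of _ "1/2"]) auto
  ultimately have "\<forall>\<^sub>F \<epsilon> in at_right 0.
      (\<forall>i. (\<Sum>j\<in>UNIV. Qdec_lim i j * v $ j) < - \<epsilon> * v $ i) \<and> 0 < \<epsilon> \<and> \<epsilon> \<le> 1/2"
    by (rule eventually_conj)
  then obtain \<epsilon> where eps: "\<And>i. (\<Sum>j\<in>UNIV. Qdec_lim i j * v $ j) < - \<epsilon> * v $ i"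
    and "0 < \<epsilon>" "\<epsilon> \<le> 1/2"
    using eventually_happens'[OF trivial_limit_at_right_real] by blast
  have "\<forall>\<^sub>F t in at_top. \<forall>i. (\<Sum>j\<in>UNIV. Qdec t i j * v $ j) < - \<epsilon> * v $ i"
  proof (rule eventually_all_finite)
    fix i
    have "((\<lambda>t. Qdec t i j) \<longlongrightarrow> Qdec_lim i j) at_top" for j
      by (cases "j \<in> extinct") (simp_all add: decouple_def Q_tendsto)
    then have "((\<lambda>t. \<Sum>j\<in>UNIV. Qdec t i j * v $ j) \<longlongrightarrow> (\<Sum>j\<in>UNIV. Qdec_lim i j * v $ j)) at_top"
      by (intro tendsto_sum tendsto_mult tendsto_const)
    from this eps[of i] show "\<forall>\<^sub>F t in at_top. (\<Sum>j\<in>UNIV. Qdec t i j * v $ j) < - \<epsilon> * v $ i"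
      by (rule order_tendstoD(2))
  qed
  with v \<open>0 < \<epsilon>\<close> \<open>\<epsilon> \<le> 1/2\<close> show ?thesis by (rule that)
qed

lemma x_exp_decay:
  obtains C \<epsilon> where "0 < \<epsilon>" "\<epsilon> \<le> 1/2" "\<And>t i. 0 \<le> t \<Longrightarrow> x t $ i \<le> C * exp (- \<epsilon> * t)"
proof -
  obtain v :: "real^'n" and \<epsilon> where v: "\<And>i. 0 < v $ i" and "0 < \<epsilon>" "\<epsilon> \<le> 1/2"
    and sub: "\<forall>\<^sub>F t in at_top. \<forall>i. (\<Sum>j\<in>UNIV. Qdec t i j * v $ j) < - \<epsilon> * v $ i"
    by (rule decay_rate_exists) blast
  have "\<forall>\<^sub>F t in at_top. (\<forall>i. (\<Sum>j\<in>UNIV. Qdec t i j * v $ j) < - \<epsilon> * v $ i)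
      \<and> (\<forall>j. x t $ j = 0 \<longleftrightarrow> j \<in> extinct) \<and> 0 \<le> t"
    by (intro eventually_conj sub extinction_settles eventually_ge_at_top)
  then obtain T where T: "\<And>t. T \<le> t \<Longrightarrow> (\<forall>i. (\<Sum>j\<in>UNIV. Qdec t i j * v $ j) < - \<epsilon> * v $ i)
      \<and> (\<forall>j. x t $ j = 0 \<longleftrightarrow> j \<in> extinct) \<and> 0 \<le> t"
    unfolding eventually_at_top_linorder by blast
  have "0 \<le> T" using T[of T] by simp
  define C0 where "C0 = (\<Sum>k\<in>UNIV. x T $ k / v $ k)"
  define V where "V = (\<Sum>k\<in>UNIV. v $ k)"
  define C where "C = (C0 * V + 1) * exp (\<epsilon> * T)"
  have late: "x t $ i \<le> C0 * exp (- \<epsilon> * (t - T)) * v $ i" if "T \<le> t" for t i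
    unfolding C0_def
    by (rule x_le_exp_vector[OF \<open>0 \<le> T\<close> _ v _ that]) (use T in \<open>auto intro: less_imp_le\<close>)
  have "x t $ i \<le> C * exp (- \<epsilon> * t)" if "0 \<le> t" for t i
  proof -
    have split: "exp (- \<epsilon> * (t - T)) = exp (\<epsilon> * T) * exp (- \<epsilon> * t)"
      by (simp add: exp_add[symmetric] algebra_simps)
    have "0 \<le> C0"
      unfolding C0_def using x_nonneg[OF \<open>0 \<le> T\<close>] v by (auto intro!: sum_nonneg divide_nonneg_pos)
    have "v $ i \<le> V" unfolding V_def using v by (intro member_le_sum) (auto intro: less_imp_le)
    show ?thesis
    proof (cases "T \<le> t")
      case True
      have "x t $ i \<le> C0 * v $ i * (exp (\<epsilon> * T) * exp (- \<epsilon> * t))"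
        using late[OF True, of i] unfolding split by (simp add: ac_simps)
      also have "\<dots> \<le> C0 * V * (exp (\<epsilon> * T) * exp (- \<epsilon> * t))"
        using \<open>v $ i \<le> V\<close> \<open>0 \<le> C0\<close> by (intro mult_right_mono mult_left_mono) auto
      also have "\<dots> \<le> C * exp (- \<epsilon> * t)" by (simp add: C_def algebra_simps)
      finally show ?thesis .
    next
      case False
      have "x t $ i \<le> 1" by (rule x_le_1[OF that])
      also have "1 \<le> exp (- \<epsilon> * (t - T))" using False \<open>0 < \<epsilon>\<close> by (simp add: mult_nonneg_nonpos)
      also have "\<dots> = exp (\<epsilon> * T) * exp (- \<epsilon> * t)" by (rule split)
      also have "\<dots> \<le> C * exp (- \<epsilon> * t)"
        unfolding C_def using \<open>0 \<le> C0\<close> \<open>v $ i \<le> V\<close> v[of i]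
        by (intro mult_right_mono) (auto simp: mult_le_cancel_right1)
      finally show ?thesis .
    qed
  qed
  with \<open>0 < \<epsilon>\<close> \<open>\<epsilon> \<le> 1/2\<close> show ?thesis by (rule that)
qed

section \<open>Exponential convergence\<close>

lemma s_sub_se_le_exp:
  assumes "0 < \<epsilon>" and x_bound: "\<And>t i. 0 \<le> t \<Longrightarrow> x t $ i \<le> C * exp (- \<epsilon> * t)" and "0 \<le> t"
  shows "s t $ i - se $ i \<le> (\<Sum>j\<in>UNIV. \<beta> i j) * C / \<epsilon> * exp (- \<epsilon> * t)"
proof (rule limit_gap_le_exp_neg[OF _ _ \<open>0 < \<epsilon>\<close> tendsto_vec_nth[OF s_tendsto] \<open>0 \<le> t\<close>])
  fix u :: real assume "0 \<le> u"
  show "((\<lambda>t. s t $ i) has_real_derivative - s u $ i * force u i) (at u within {0..})"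
    using has_real_derivative_vec_nth[OF s_deriv[OF \<open>0 \<le> u\<close>], of i] by simp
  have "s u $ i * force u i \<le> force u i"
    using s_le_1[OF \<open>0 \<le> u\<close>] s_nonneg[OF \<open>0 \<le> u\<close>] force_nonneg[OF \<open>0 \<le> u\<close>]
    by (simp add: mult_left_le_one_le)
  also have "\<dots> \<le> (\<Sum>j\<in>nbrs \<beta> i. \<beta> i j * x u $ j)"
    unfolding force_def using infection_rate_le opn_nonneg x_nonneg \<open>0 \<le> u\<close>
    by (intro sum_mono mult_right_mono) auto
  also have "\<dots> \<le> (\<Sum>j\<in>UNIV. \<beta> i j * x u $ j)"
    using beta_nonneg x_nonneg[OF \<open>0 \<le> u\<close>] by (intro sum_mono2) auto
  also have "\<dots> \<le> (\<Sum>j\<in>UNIV. \<beta> i j * (C * exp (- \<epsilon> * u)))"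
    using beta_nonneg x_bound[OF \<open>0 \<le> u\<close>] by (intro sum_mono mult_left_mono) auto
  also have "\<dots> = (\<Sum>j\<in>UNIV. \<beta> i j) * C * exp (- \<epsilon> * u)"
    by (simp add: sum_distrib_right mult.assoc)
  finally show "- ((\<Sum>j\<in>UNIV. \<beta> i j) * C) * exp (- \<epsilon> * u) \<le> - s u $ i * force u i" by simp
qed

lemma opn_close_exp:
  assumes "0 < \<epsilon>" "\<epsilon> \<le> 1/2" "0 \<le> A"
    and s_bound: "\<And>t i. 0 \<le> t \<Longrightarrow> s t $ i - se $ i \<le> A * exp (- \<epsilon> * t)" and "0 \<le> t"
  shows "\<bar>opn t $ i - oe $ i\<bar> \<le> (2 * A + 1) * exp (- \<epsilon> * t)"
proof -
  have "opn t $ i - oe $ i \<le> exp (- t)" by (rule opn_sub_oe_le_exp[OF \<open>0 \<le> t\<close>])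
  also have "\<dots> \<le> exp (- \<epsilon> * t)"
    using mult_left_le_one_le[of t \<epsilon>] \<open>0 \<le> t\<close> \<open>0 < \<epsilon>\<close> \<open>\<epsilon> \<le> 1/2\<close> by simp
  also have "\<dots> \<le> (2 * A + 1) * exp (- \<epsilon> * t)" using \<open>0 \<le> A\<close> by simp
  finally have upper: "opn t $ i - oe $ i \<le> (2 * A + 1) * exp (- \<epsilon> * t)" .
  have "oe $ i - opn t $ i \<le> (2 * A + 1) * exp (- \<epsilon> * t)"
  proof (rule oe_sub_opn_le[OF order_refl \<open>0 \<le> t\<close>])
    fix u :: real
    show "((\<lambda>t. (2 * A + 1) * exp (- \<epsilon> * t)) has_real_derivative
        - \<epsilon> * ((2 * A + 1) * exp (- \<epsilon> * u))) (at u within {0..})"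
      by (auto intro!: derivative_eq_intros)
    assume "0 \<le> u"
    have "A \<le> (1 - \<epsilon>) * (2 * A + 1)"
      using \<open>\<epsilon> \<le> 1/2\<close> \<open>0 \<le> A\<close> mult_right_mono[of \<epsilon> "1/2" "2 * A + 1"] by (simp add: algebra_simps)
    then have "A * exp (- \<epsilon> * u) \<le> (1 - \<epsilon>) * (2 * A + 1) * exp (- \<epsilon> * u)"
      by (rule mult_right_mono) simp
    then show "s u $ j - se $ j \<le> (2 * A + 1) * exp (- \<epsilon> * u) + - \<epsilon> * ((2 * A + 1) * exp (- \<epsilon> * u))" for j
      using s_bound[OF \<open>0 \<le> u\<close>, of j] by (simp add: algebra_simps)
  next
    fix j show "oe $ j - opn 0 $ j \<le> (2 * A + 1) * exp (- \<epsilon> * 0)"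
      using oe_le_1[of j] o0[of j] \<open>0 \<le> A\<close> by simp
  qed
  with upper show ?thesis by (simp add: abs_le_iff)
qed

lemma exponential_convergence:
  obtains C \<alpha> where "0 < \<alpha>"
    "\<And>t. 0 \<le> t \<Longrightarrow> norm (s t - se) + norm (x t) + norm (opn t - oe) \<le> C * exp (- \<alpha> * t)"
proof -
  obtain C \<epsilon> where "0 < \<epsilon>" "\<epsilon> \<le> 1/2" and x_bound: "\<And>t i. 0 \<le> t \<Longrightarrow> x t $ i \<le> C * exp (- \<epsilon> * t)"
    by (rule x_exp_decay) blast
  have "0 \<le> C" using x_bound[of 0 undefined] x_nonneg[of 0 undefined] by simp
  define B where "B = (\<Sum>i\<in>UNIV. \<Sum>j\<in>UNIV. \<beta> i j)"
  define A where "A = B * C / \<epsilon>"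
  have "0 \<le> B" unfolding B_def using beta_nonneg by (simp add: sum_nonneg)
  then have "0 \<le> A" using \<open>0 \<le> C\<close> \<open>0 < \<epsilon>\<close> by (simp add: A_def)
  have s_bound: "s t $ i - se $ i \<le> A * exp (- \<epsilon> * t)" if "0 \<le> t" for t i
  proof -
    have "(\<Sum>j\<in>UNIV. \<beta> i j) \<le> B"
      unfolding B_def using beta_nonneg
      by (intro member_le_sum[where f = "\<lambda>i. \<Sum>j\<in>UNIV. \<beta> i j"]) (auto intro: sum_nonneg)
    then have "(\<Sum>j\<in>UNIV. \<beta> i j) * C / \<epsilon> * exp (- \<epsilon> * t) \<le> A * exp (- \<epsilon> * t)"
      unfolding A_def using \<open>0 \<le> C\<close> \<open>0 < \<epsilon>\<close>
      by (intro mult_right_mono divide_right_mono mult_right_mono) auto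
    moreover have "s t $ i - se $ i \<le> (\<Sum>j\<in>UNIV. \<beta> i j) * C / \<epsilon> * exp (- \<epsilon> * t)"
      by (rule s_sub_se_le_exp[OF \<open>0 < \<epsilon>\<close>]) (use x_bound that in auto)
    ultimately show ?thesis by linarith
  qed
  define n where "n = real CARD('n)"
  have "norm (s t - se) + norm (x t) + norm (opn t - oe) \<le> n * (3 * A + C + 1) * exp (- \<epsilon> * t)"
    if "0 \<le> t" for t
  proof -
    define E where "E = exp (- \<epsilon> * t)"
    have "\<bar>(s t - se) $ i\<bar> \<le> A * E" for i
      using s_bound[OF that, of i] se_le[OF that, of i] by (simp add: E_def)
    then have "norm (s t - se) \<le> n * (A * E)" unfolding n_def by (rule norm_le_card_mult)
    moreover have "\<bar>x t $ i\<bar> \<le> C * E" for i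
      using x_bound[OF that, of i] x_nonneg[OF that, of i] by (simp add: E_def)
    then have "norm (x t) \<le> n * (C * E)" unfolding n_def by (rule norm_le_card_mult)
    moreover have "\<bar>(opn t - oe) $ i\<bar> \<le> (2 * A + 1) * E" for i
      using opn_close_exp[OF \<open>0 < \<epsilon>\<close> \<open>\<epsilon> \<le> 1/2\<close> \<open>0 \<le> A\<close> s_bound that] by (simp add: E_def)
    then have "norm (opn t - oe) \<le> n * ((2 * A + 1) * E)" unfolding n_def by (rule norm_le_card_mult)
    moreover have "n * (A * E) + n * (C * E) + n * ((2 * A + 1) * E) = n * (3 * A + C + 1) * E"
      by (simp add: algebra_simps)
    ultimately show ?thesis unfolding E_def by linarith
  qed
  with \<open>0 < \<epsilon>\<close> show ?thesis by (rule that)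
qed

lemma x_tendsto_zero: "(x \<longlongrightarrow> 0) at_top"
proof -
  obtain C \<alpha> where "0 < \<alpha>"
    and bound: "\<And>t. 0 \<le> t \<Longrightarrow> norm (s t - se) + norm (x t) + norm (opn t - oe) \<le> C * exp (- \<alpha> * t)"
    by (rule exponential_convergence) blast
  have "\<forall>\<^sub>F t in at_top. norm (x t) \<le> C * exp (- \<alpha> * t)"
    using eventually_ge_at_top[of 0]
  proof eventually_elim
    case (elim t)
    then show ?case using bound[OF elim] norm_ge_zero[of "s t - se"] norm_ge_zero[of "opn t - oe"] by linarith
  qed
  moreover have "((\<lambda>t. C * exp (- \<alpha> * t)) \<longlongrightarrow> 0) at_top"
    using tendsto_mult[OF tendsto_const tendsto_exp_neg_mult_at_top[OF \<open>0 < \<alpha>\<close>], of C] by simp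
  ultimately show ?thesis by (rule Lim_null_comparison)
qed

end

theorem theorem2:
  fixes \<beta> abar :: "'n::finite \<Rightarrow> 'n \<Rightarrow> real"
    and \<gamma> :: "'n \<Rightarrow> real"
    and \<beta>min \<gamma>min :: real
    and s x opn :: "real \<Rightarrow> real^'n"
  assumes beta_nonneg: "\<And>i j. \<beta> i j \<ge> 0"
    and beta_min_pos: "\<beta>min > 0"
    and beta_ge: "\<And>i j. j \<in> nbrs \<beta> i \<Longrightarrow> \<beta> i j \<ge> \<beta>min"
    and gamma_min_pos: "\<gamma>min > 0"
    and gamma_ge: "\<And>i. \<gamma> i \<ge> \<gamma>min"
    and abar_nonneg: "\<And>i j. abar i j \<ge> 0"
    and G_sc: "strongly_connected \<beta>"
    and Gbar_sc: "strongly_connected abar"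
    and s0: "\<And>i. s 0 $ i \<in> {0..1}"
    and x0: "\<And>i. x 0 $ i \<in> {0..1}"
    and o0: "\<And>i. opn 0 $ i \<in> {0..1}"
    and sx0: "\<And>i. s 0 $ i + x 0 $ i \<le> 1"
    and ds: "\<And>t. t \<ge> 0 \<Longrightarrow> (s has_vector_derivative
              (\<chi> i. - s t $ i * (\<Sum>j\<in>nbrs \<beta> i. (\<beta> i j - (\<beta> i j - \<beta>min) * opn t $ i) * x t $ j)))
              (at t within {0..})"
    and dx: "\<And>t. t \<ge> 0 \<Longrightarrow> (x has_vector_derivative
              (\<chi> i. s t $ i * (\<Sum>j\<in>nbrs \<beta> i. (\<beta> i j - (\<beta> i j - \<beta>min) * opn t $ i) * x t $ j)
                     - (\<gamma>min + (\<gamma> i - \<gamma>min) * opn t $ i) * x t $ i))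
              (at t within {0..})"
    and do: "\<And>t. t \<ge> 0 \<Longrightarrow> (opn has_vector_derivative
              ((1 - s t) - (laplacian abar + mat 1) *v opn t))
              (at t within {0..})"
  shows "\<exists>se :: real^'n. (\<forall>i. se $ i \<in> {0..1}) \<and>
           (s \<longlongrightarrow> se) at_top \<and> (x \<longlongrightarrow> 0) at_top \<and>
           (opn \<longlongrightarrow> matrix_inv (laplacian abar + mat 1) *v (1 - se)) at_top \<and>
           (\<exists>C \<alpha>. \<alpha> > 0 \<and> (\<forall>t\<ge>0.
              norm (s t - se) + norm (x t)
              + norm (opn t - matrix_inv (laplacian abar + mat 1) *v (1 - se))
              \<le> C * exp (- \<alpha> * t)))"
proof -
  interpret sir_opinion \<beta> abar \<gamma> \<beta>min \<gamma>min s x opn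
    by (rule sir_opinion.intro) (fact beta_nonneg beta_min_pos beta_ge gamma_min_pos gamma_ge
        abar_nonneg s0 x0 o0 sx0 ds dx do)+
  obtain C \<alpha> where "0 < \<alpha>"
    and "\<And>t. 0 \<le> t \<Longrightarrow> norm (s t - se) + norm (x t) + norm (opn t - oe) \<le> C * exp (- \<alpha> * t)"
    by (rule exponential_convergence) blast
  then have "\<exists>C \<alpha>. \<alpha> > 0 \<and> (\<forall>t\<ge>0. norm (s t - se) + norm (x t) + norm (opn t - oe) \<le> C * exp (- \<alpha> * t))"
    by blast
  moreover have "\<forall>i. se $ i \<in> {0..1}" using se_nonneg se_le_1 by simp
  ultimately show ?thesis
    using s_tendsto x_tendsto_zero opn_tendsto unfolding oe_def M_def by blast
qed

end
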